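(* Let $T$ be a quantizable map satisfying Condition 1, $U=U_\Bbbk$ a quantization of $T$ on $\mathbb C^{N_\Bbbk}$, and $\psi_\Bbbk$ a normalized eigenvector of $U$. Fix the smoothed quantum partition $P_1,\dots,P_l$ described in the context. Let $\varepsilon=\varepsilon_0\dots\varepsilon_{m-1}\in\{1,\dots,l\}^m$. Then for every $n\geq1$, $$\hat\mu_\Bbbk([\![\varepsilon]\!])=\hat\mu_\Bbbk(T^{-n}[\![\varepsilon]\!])+R_{n,m},\qquad |R_{n,m}|\leq n\,C(m)\,\frac{\Lambda_{\max}^{m+n}}{N_\Bbbk},$$ where the constant $C(m)$ depends only on $m$ (for the fixed smoothed partition), and not on $n$, $N_\Bbbk$ or $\psi_\Bbbk$. The same statement holds with $\hat\mu_\Bbbk$ replaced by $\hat\mu^*_\Bbbk$.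
   Context: Condition 1: $T:[0,1]\to[0,1]$, integers $\Lambda_1,\dots,\Lambda_l\geq2$ with $\sum\Lambda_j^{-1}=1$, consecutive intervals $I_1,\dots,I_l$ with $|I_j|=\Lambda_j^{-1}$, $T$ affine with slope $\Lambda_j$ on $I_j$ mapping $I_j$ onto $[0,1]$; $\Lambda_{\max}=\max_j\Lambda_j$. Quantizable: there are partitions $\mathcal M_\Bbbk$ of $[0,1]$ into $E_i=[(i-1)/N_\Bbbk,i/N_\Bbbk]$ with $N_{\Bbbk+1}/N_\Bbbk$ an integer $>1$ and all endpoints of the $I_j$ among the endpoints of $\mathcal M_1$, and unitary $U_\Bbbk$ with $|U_\Bbbk(i,j)|^2=|E_j\cap T^{-1}E_i|/|E_j|$. $\mathrm{Op}_\Bbbk(f)$ is diagonal with $(i,i)$ entry $N_\Bbbk\int_{E_i}f\,dx$. Smoothed partition: for a fixed $\delta>0$, functions $\chi_1,\dots,\chi_l$, Lipschitz on the circle $[0,1]/(0\sim1)$, with $\chi_i=1$ on $[\beta_-(I_i)+\delta,\beta_+(I_i)-\delta]$ ($\beta_\mp$ the left/right endpoints of $I_i$), decaying to $0$ outside that interval, and $\sum_i\chi_i^2\equiv1$; $P_i=\mathrm{Op}_\Bbbk(\chi_i)$ and $P_i(j)=U^{-j}P_iU^j$. For a word $\varepsilon=\varepsilon_0\dots\varepsilon_{n-1}$ put $P_\varepsilon=P_{\varepsilon_{n-1}}(n-1)\cdots P_{\varepsilon_1}(1)P_{\varepsilon_0}(0)$, $\hat\mu_\Bbbk([\![\varepsilon]\!])=\|P_\varepsilon\psi_\Bbbk\|^2$,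 $\hat\mu^*_\Bbbk([\![\varepsilon]\!])=\|P^*_\varepsilon\psi_\Bbbk\|^2$. For $|\varepsilon|=m$ define $\hat\mu_\Bbbk(T^{-n}[\![\varepsilon]\!])=\sum_{|\varepsilon'|=n}\hat\mu_\Bbbk([\![\varepsilon'\varepsilon]\!])$ (concatenated words), and similarly for $\hat\mu^*_\Bbbk$. *)

theory Defs
  imports "HOL-Analysis.Analysis" "Jordan_Normal_Form.Schur_Decomposition"
begin

definition beta_lo :: "(nat \<Rightarrow> nat) \<Rightarrow> nat \<Rightarrow> real" where
  "beta_lo \<Lambda> j = (\<Sum>i\<in>{1..<j}. 1 / real (\<Lambda> i))"

definition beta_hi :: "(nat \<Rightarrow> nat) \<Rightarrow> nat \<Rightarrow> real" where
  "beta_hi \<Lambda> j = beta_lo \<Lambda> j + 1 / real (\<Lambda> j)"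

definition condition1 :: "(real \<Rightarrow> real) \<Rightarrow> nat \<Rightarrow> (nat \<Rightarrow> nat) \<Rightarrow> bool" where
  "condition1 T l \<Lambda> \<longleftrightarrow>
     (\<forall>j\<in>{1..l}. \<Lambda> j \<ge> 2) \<and>
     (\<Sum>j\<in>{1..l}. 1 / real (\<Lambda> j)) = 1 \<and>
     (\<forall>x\<in>{0..1}. T x \<in> {0..1}) \<and>
     (\<forall>j\<in>{1..l}. \<forall>x\<in>{beta_lo \<Lambda> j<..<beta_hi \<Lambda> j}.
         T x = real (\<Lambda> j) * (x - beta_lo \<Lambda> j))"

definition Lambda_max :: "nat \<Rightarrow> (nat \<Rightarrow> nat) \<Rightarrow> nat" where
  "Lambda_max l \<Lambda> = Max (\<Lambda> ` {1..l})"

(* Cell E_{i+1} = [i/N, (i+1)/N] of the partition M_k (0-based index i < N) *)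
definition cell :: "nat \<Rightarrow> nat \<Rightarrow> real set" where
  "cell N i = {real i / real N .. real (i + 1) / real N}"

definition unitary_mat :: "nat \<Rightarrow> complex mat \<Rightarrow> bool" where
  "unitary_mat N U \<longleftrightarrow> U \<in> carrier_mat N N \<and>
     mat_adjoint U * U = 1\<^sub>m N \<and> U * mat_adjoint U = 1\<^sub>m N"

definition quantization :: "(real \<Rightarrow> real) \<Rightarrow> nat \<Rightarrow> (nat \<Rightarrow> nat) \<Rightarrow>
    (nat \<Rightarrow> nat) \<Rightarrow> (nat \<Rightarrow> complex mat) \<Rightarrow> bool" where
  "quantization T l \<Lambda> N U \<longleftrightarrow>
     (\<forall>k\<ge>1. N k > 0 \<and> N k dvd N (Suc k) \<and> N k < N (Suc k)) \<and>
     (\<forall>j\<in>{1..l}. (\<exists>i::nat. beta_lo \<Lambda> j = real i / real (N 1)) \<and>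
                 (\<exists>i::nat. beta_hi \<Lambda> j = real i / real (N 1))) \<and>
     (\<forall>k\<ge>1. unitary_mat (N k) (U k) \<and>
        (\<forall>i<N k. \<forall>j<N k. (cmod (U k $$ (i, j)))\<^sup>2 =
            measure lebesgue (cell (N k) j \<inter> T -` cell (N k) i) / (1 / real (N k))))"

(* Smoothed partition chi_1..chi_l, functions on the circle R/Z given as 1-periodic functions *)
definition smoothed_partition :: "nat \<Rightarrow> (nat \<Rightarrow> nat) \<Rightarrow> real \<Rightarrow> (nat \<Rightarrow> real \<Rightarrow> real) \<Rightarrow> bool" where
  "smoothed_partition l \<Lambda> \<delta> chi \<longleftrightarrow>
     \<delta> > 0 \<and>
     (\<forall>i\<in>{1..l}. (\<forall>x. chi i (x + 1) = chi i x) \<and>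
        (\<exists>L. \<forall>x y. \<bar>chi i x - chi i y\<bar> \<le> L * \<bar>x - y\<bar>) \<and>
        (\<forall>x\<in>{beta_lo \<Lambda> i + \<delta> .. beta_hi \<Lambda> i - \<delta>}. chi i x = 1) \<and>
        (\<forall>x. (\<forall>z::int. x + real_of_int z \<notin> {beta_lo \<Lambda> i - \<delta> .. beta_hi \<Lambda> i + \<delta>})
               \<longrightarrow> chi i x = 0)) \<and>
     (\<forall>x. (\<Sum>i\<in>{1..l}. (chi i x)\<^sup>2) = 1)"

definition Op :: "nat \<Rightarrow> (real \<Rightarrow> real) \<Rightarrow> complex mat" where
  "Op N f = mat N N (\<lambda>(i, j). if i = j then complex_of_real (real N * integral (cell N i) f) else 0)"

definition Pt :: "nat \<Rightarrow> complex mat \<Rightarrow> (nat \<Rightarrow> real \<Rightarrow> real) \<Rightarrow> nat \<Rightarrow> nat \<Rightarrow> complex mat" where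
  "Pt N U chi a j = (mat_adjoint U ^\<^sub>m j) * Op N (chi a) * (U ^\<^sub>m j)"

(* Pw_from j [e_j, ..., e_{n-1}] = P_{e_{n-1}}(n-1) ... P_{e_j}(j) *)
fun Pw_from :: "nat \<Rightarrow> complex mat \<Rightarrow> (nat \<Rightarrow> real \<Rightarrow> real) \<Rightarrow> nat \<Rightarrow> nat list \<Rightarrow> complex mat" where
  "Pw_from N U chi j [] = 1\<^sub>m N"
| "Pw_from N U chi j (a # \<epsilon>) = Pw_from N U chi (Suc j) \<epsilon> * Pt N U chi a j"

definition Pword :: "nat \<Rightarrow> complex mat \<Rightarrow> (nat \<Rightarrow> real \<Rightarrow> real) \<Rightarrow> nat list \<Rightarrow> complex mat" where
  "Pword N U chi \<epsilon> = Pw_from N U chi 0 \<epsilon>"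

definition sqnorm :: "complex vec \<Rightarrow> real" where
  "sqnorm v = (\<Sum>i<dim_vec v. (cmod (v $ i))\<^sup>2)"

definition words :: "nat \<Rightarrow> nat \<Rightarrow> nat list set" where
  "words l n = {xs. set xs \<subseteq> {1..l} \<and> length xs = n}"

definition mu_hat :: "nat \<Rightarrow> complex mat \<Rightarrow> (nat \<Rightarrow> real \<Rightarrow> real) \<Rightarrow> complex vec \<Rightarrow> nat list \<Rightarrow> real" where
  "mu_hat N U chi \<psi> \<epsilon> = sqnorm (Pword N U chi \<epsilon> *\<^sub>v \<psi>)"

definition mu_hat_star :: "nat \<Rightarrow> complex mat \<Rightarrow> (nat \<Rightarrow> real \<Rightarrow> real) \<Rightarrow> complex vec \<Rightarrow> nat list \<Rightarrow> real" where
  "mu_hat_star N U chi \<psi> \<epsilon> = sqnorm (mat_adjoint (Pword N U chi \<epsilon>) *\<^sub>v \<psi>)"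

(* hat mu_k(T^{-n}[[eps]]) = sum over words eps' of length n of hat mu_k([[eps' eps]]) *)
definition mu_hat_pull :: "nat \<Rightarrow> nat \<Rightarrow> complex mat \<Rightarrow> (nat \<Rightarrow> real \<Rightarrow> real) \<Rightarrow> complex vec \<Rightarrow> nat \<Rightarrow> nat list \<Rightarrow> real" where
  "mu_hat_pull l N U chi \<psi> n \<epsilon> = (\<Sum>\<epsilon>'\<in>words l n. mu_hat N U chi \<psi> (\<epsilon>' @ \<epsilon>))"

definition mu_hat_star_pull :: "nat \<Rightarrow> nat \<Rightarrow> complex mat \<Rightarrow> (nat \<Rightarrow> real \<Rightarrow> real) \<Rightarrow> complex vec \<Rightarrow> nat \<Rightarrow> nat list \<Rightarrow> real" where
  "mu_hat_star_pull l N U chi \<psi> n \<epsilon> = (\<Sum>\<epsilon>'\<in>words l n. mu_hat_star N U chi \<psi> (\<epsilon>' @ \<epsilon>))"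

end

theory Submission
  imports Defs
begin

text \<open>
  Let \<open>W\<^sub>j\<close> be the operator whose expectation in \<open>\<psi>\<^sub>\<Bbbk>\<close> is
  \<open>\<mu>\<^sub>\<Bbbk>(T\<^sup>-\<^sup>j[\<epsilon>])\<close>: it arises from \<open>P\<^sub>\<epsilon>\<^sup>* P\<^sub>\<epsilon>\<close> by \<open>j\<close> applications of the
  quantum transfer operator \<open>X \<mapsto> \<Sum>\<^sub>a P\<^sub>a U\<^sup>* X U P\<^sub>a\<close>. The \<open>P\<^sub>a\<close> are
  diagonal, and an Egorov estimate says that \<open>U\<^sup>* g U\<close> is the multiplication by
  \<open>g \<circ> T\<close> up to \<open>O(Lip g / N)\<close>, because \<open>U\<close> only connects cells \<open>E\<^sub>j\<close> and \<open>E\<^sub>i\<close>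
  with \<open>T E\<^sub>j \<inter> E\<^sub>i\<close> of positive measure. Hence \<open>W\<^sub>j\<close> is within
  \<open>O(\<Lambda>\<^sub>m\<^sub>a\<^sub>x\<^sup>m\<^sup>+\<^sup>j / N)\<close> of a multiplication operator by a classical symbol \<open>g\<close>.
  Since \<open>\<Sum>\<^sub>a \<chi>\<^sub>a\<^sup>2 = 1\<close>, one more transfer step maps it, up to the same error, to
  multiplication by \<open>g \<circ> T\<close>, i.e. essentially to \<open>U\<^sup>* W\<^sub>j U\<close>, and conjugation by \<open>U\<close>
  does not change the expectation in an eigenvector. Summing over the \<open>n\<close> steps gives the
  bound. For \<open>\<mu>\<^sup>*\<close> the step is simpler: \<open>\<Sum>\<^sub>a P\<^sub>a\<^sup>2\<close> is the identity up to \<open>O(1/N)\<close>.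
\<close>

section \<open>Matrices, inner products and operator bounds\<close>

lemma index_mult_mat_sum:
  assumes "A \<in> carrier_mat n n" "B \<in> carrier_mat n n" "i < n" "j < n"
  shows "(A * B) $$ (i,j) = (\<Sum>k<n. A $$ (i,k) * B $$ (k,j))"
  using assms by (auto simp: scalar_prod_def atLeast0LessThan intro!: sum.cong)

lemma index_mult_mat_vec_sum:
  assumes "A \<in> carrier_mat n n" "v \<in> carrier_vec n" "i < n"
  shows "(A *\<^sub>v v) $ i = (\<Sum>k<n. A $$ (i,k) * v $ k)"
  using assms by (auto simp: scalar_prod_def atLeast0LessThan intro!: sum.cong)

lemma dim_mat_adjoint[simp]: "dim_row (mat_adjoint A) = dim_col A" "dim_col (mat_adjoint A) = dim_row A"
  unfolding mat_adjoint_def by (auto simp: mat_of_rows_def)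

lemma mat_adjoint_carrier[simp]: "A \<in> carrier_mat n m \<Longrightarrow> mat_adjoint A \<in> carrier_mat m n"
  unfolding mat_adjoint_def by auto

lemma index_mat_adjoint[simp]:
  assumes "i < dim_col A" "j < dim_row A"
  shows "mat_adjoint A $$ (i,j) = cnj (A $$ (j,i))"
  using assms unfolding mat_adjoint_def by (auto simp: mat_of_rows_def cols_def)

lemma mat_adjoint_mult:
  fixes A B :: "complex mat"
  assumes "A \<in> carrier_mat n n" "B \<in> carrier_mat n n"
  shows "mat_adjoint (A * B) = mat_adjoint B * mat_adjoint A"
proof (rule eq_matI)
  fix i j assume ij: "i < dim_row (mat_adjoint B * mat_adjoint A)" "j < dim_col (mat_adjoint B * mat_adjoint A)"
  then have i: "i < n" and j: "j < n" using assms by auto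
  show "mat_adjoint (A * B) $$ (i, j) = (mat_adjoint B * mat_adjoint A) $$ (i, j)"
  proof -
    have "mat_adjoint (A * B) $$ (i, j) = cnj ((A * B) $$ (j, i))" using assms i j by simp
    also have "\<dots> = (\<Sum>k<n. cnj (B $$ (k,i)) * cnj (A $$ (j,k)))"
      using index_mult_mat_sum[OF assms j i] by (simp add: mult.commute del: index_mult_mat)
    also have "\<dots> = (mat_adjoint B * mat_adjoint A) $$ (i, j)"
      using assms i j by (subst index_mult_mat_sum[of _ n]) auto
    finally show ?thesis .
  qed
qed (use assms in auto)

lemma mat_adjoint_adjoint:
  fixes A :: "complex mat"
  assumes "A \<in> carrier_mat n m"
  shows "mat_adjoint (mat_adjoint A) = A"
  by (rule eq_matI) (use assms in \<open>auto simp: carrier_matD\<close>)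

lemma mat_adjoint_one[simp]: "mat_adjoint (1\<^sub>m n :: complex mat) = 1\<^sub>m n"
  by (rule eq_matI) auto

definition vnorm :: "complex vec \<Rightarrow> real" where "vnorm v = sqrt (sqnorm v)"
definition cinner :: "complex vec \<Rightarrow> complex vec \<Rightarrow> complex" where
  "cinner u v = (\<Sum>i<dim_vec v. cnj (u $ i) * v $ i)"

lemma sqnorm_nonneg[simp]: "0 \<le> sqnorm v" unfolding sqnorm_def by (auto intro: sum_nonneg)
lemma vnorm_nonneg[simp]: "0 \<le> vnorm v" unfolding vnorm_def by auto
lemma vnorm_square: "(vnorm v)^2 = sqnorm v" unfolding vnorm_def by simp

lemma vnorm_eq_L2_set: "vnorm v = L2_set (\<lambda>i. cmod (v $ i)) {..<dim_vec v}"
  unfolding vnorm_def sqnorm_def L2_set_def by simp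

lemma cinner_self: "cinner v v = of_real (sqnorm v)"
  unfolding cinner_def sqnorm_def
  by (simp add: complex_norm_square[symmetric] mult.commute)

lemma cinner_Cauchy_Schwarz:
  assumes "dim_vec u = dim_vec v"
  shows "cmod (cinner u v) \<le> vnorm u * vnorm v"
proof -
  have "cmod (cinner u v) \<le> (\<Sum>i<dim_vec v. cmod (cnj (u $ i) * v $ i))"
    unfolding cinner_def by (rule norm_sum)
  also have "\<dots> = (\<Sum>i<dim_vec v. \<bar>cmod (u $ i)\<bar> * \<bar>cmod (v $ i)\<bar>)"
    by (simp add: norm_mult)
  also have "\<dots> \<le> L2_set (\<lambda>i. cmod (u $ i)) {..<dim_vec v} * L2_set (\<lambda>i. cmod (v $ i)) {..<dim_vec v}"
    by (rule L2_set_mult_ineq)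
  finally show ?thesis using assms by (simp add: vnorm_eq_L2_set)
qed

lemma vnorm_add_le:
  assumes "dim_vec u = dim_vec v"
  shows "vnorm (u + v) \<le> vnorm u + vnorm v"
proof -
  have "vnorm (u + v) = L2_set (\<lambda>i. cmod (u $ i + v $ i)) {..<dim_vec v}"
    using assms unfolding vnorm_eq_L2_set by (auto intro!: L2_set_cong)
  also have "\<dots> \<le> L2_set (\<lambda>i. cmod (u $ i) + cmod (v $ i)) {..<dim_vec v}"
    by (rule L2_set_mono) (auto simp: norm_triangle_ineq)
  also have "\<dots> \<le> L2_set (\<lambda>i. cmod (u $ i)) {..<dim_vec v} + L2_set (\<lambda>i. cmod (v $ i)) {..<dim_vec v}"
    by (rule L2_set_triangle_ineq)
  finally show ?thesis using assms by (simp add: vnorm_eq_L2_set)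
qed

lemma vnorm_diff_le:
  assumes "dim_vec u = dim_vec v"
  shows "vnorm (u - v) \<le> vnorm u + vnorm v"
proof -
  have "u - v = u + (- v)" using assms by (auto intro!: eq_vecI)
  moreover have "vnorm (- v) = vnorm v" unfolding vnorm_eq_L2_set by (auto intro!: L2_set_cong)
  ultimately show ?thesis using vnorm_add_le[of u "- v"] assms by simp
qed

lemma sqnorm_smult: "sqnorm (c \<cdot>\<^sub>v v) = (cmod c)^2 * sqnorm v"
  unfolding sqnorm_def by (simp add: norm_mult power_mult_distrib sum_distrib_left)

definition op_bound :: "nat \<Rightarrow> complex mat \<Rightarrow> real \<Rightarrow> bool" where
  "op_bound n A c \<longleftrightarrow> A \<in> carrier_mat n n \<and> 0 \<le> c \<and> (\<forall>v\<in>carrier_vec n. vnorm (A *\<^sub>v v) \<le> c * vnorm v)"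

lemma op_boundD: "op_bound n A c \<Longrightarrow> v \<in> carrier_vec n \<Longrightarrow> vnorm (A *\<^sub>v v) \<le> c * vnorm v"
  unfolding op_bound_def by auto

lemma op_bound_carrier: "op_bound n A c \<Longrightarrow> A \<in> carrier_mat n n" unfolding op_bound_def by auto
lemma op_bound_mono: "op_bound n A c \<Longrightarrow> c \<le> d \<Longrightarrow> op_bound n A d"
  unfolding op_bound_def by (meson mult_right_mono order_trans vnorm_nonneg)

lemma op_bound_mult:
  assumes "op_bound n A a" "op_bound n B b"
  shows "op_bound n (A * B) (a * b)"
proof -
  have A: "A \<in> carrier_mat n n" and B: "B \<in> carrier_mat n n" using assms op_bound_carrier by auto
  show ?thesis unfolding op_bound_def
  proof (intro conjI ballI)
    fix v :: "complex vec" assume v: "v \<in> carrier_vec n"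
    have "vnorm ((A * B) *\<^sub>v v) = vnorm (A *\<^sub>v (B *\<^sub>v v))" using A B v by simp
    also have "\<dots> \<le> a * vnorm (B *\<^sub>v v)" using assms(1) B v by (intro op_boundD) auto
    also have "\<dots> \<le> a * (b * vnorm v)" using assms op_boundD[OF assms(2) v] by (intro mult_left_mono) (auto simp: op_bound_def)
    finally show "vnorm ((A * B) *\<^sub>v v) \<le> a * b * vnorm v" by simp
  qed (use A B assms in \<open>auto simp: op_bound_def\<close>)
qed

lemma op_bound_add:
  assumes "op_bound n A a" "op_bound n B b"
  shows "op_bound n (A + B) (a + b)"
proof -
  have A: "A \<in> carrier_mat n n" and B: "B \<in> carrier_mat n n" using assms op_bound_carrier by auto
  show ?thesis unfolding op_bound_def
  proof (intro conjI ballI)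
    fix v :: "complex vec" assume v: "v \<in> carrier_vec n"
    have "vnorm ((A + B) *\<^sub>v v) = vnorm (A *\<^sub>v v + B *\<^sub>v v)" using A B v by (simp add: add_mult_distrib_mat_vec)
    also have "\<dots> \<le> vnorm (A *\<^sub>v v) + vnorm (B *\<^sub>v v)" using A B by (intro vnorm_add_le) auto
    also have "\<dots> \<le> a * vnorm v + b * vnorm v" using op_boundD[OF assms(1) v] op_boundD[OF assms(2) v] by simp
    finally show "vnorm ((A + B) *\<^sub>v v) \<le> (a + b) * vnorm v" by (simp add: algebra_simps)
  qed (use A B assms in \<open>auto simp: op_bound_def\<close>)
qed

lemma op_bound_diff:
  assumes "op_bound n A a" "op_bound n B b"
  shows "op_bound n (A - B) (a + b)"
proof -
  have A: "A \<in> carrier_mat n n" and B: "B \<in> carrier_mat n n" using assms op_bound_carrier by auto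
  show ?thesis unfolding op_bound_def
  proof (intro conjI ballI)
    fix v :: "complex vec" assume v: "v \<in> carrier_vec n"
    have "vnorm ((A - B) *\<^sub>v v) = vnorm (A *\<^sub>v v - B *\<^sub>v v)" using A B v by (simp add: minus_mult_distrib_mat_vec)
    also have "\<dots> \<le> vnorm (A *\<^sub>v v) + vnorm (B *\<^sub>v v)" using A B by (intro vnorm_diff_le) auto
    also have "\<dots> \<le> a * vnorm v + b * vnorm v" using op_boundD[OF assms(1) v] op_boundD[OF assms(2) v] by simp
    finally show "vnorm ((A - B) *\<^sub>v v) \<le> (a + b) * vnorm v" by (simp add: algebra_simps)
  qed (use A B assms in \<open>auto simp: op_bound_def\<close>)
qed

lemma op_bound_diff_trans:
  fixes A B C :: "complex mat"
  assumes "op_bound n (A - B) a" "op_bound n (B - C) b"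
    and "A \<in> carrier_mat n n" "B \<in> carrier_mat n n" "C \<in> carrier_mat n n"
  shows "op_bound n (A - C) (a + b)"
proof -
  have "A - C = (A - B) + (B - C)" by (rule eq_matI) (use assms in \<open>auto simp: algebra_simps\<close>)
  then show ?thesis using op_bound_add[OF assms(1,2)] by simp
qed

lemma op_bound_diff_common:
  fixes A B C :: "complex mat"
  assumes "op_bound n (A - C) a" "op_bound n (B - C) b"
    and "A \<in> carrier_mat n n" "B \<in> carrier_mat n n" "C \<in> carrier_mat n n"
  shows "op_bound n (A - B) (a + b)"
proof -
  have "A - B = (A - C) - (B - C)" by (rule eq_matI) (use assms in auto)
  then show ?thesis using op_bound_diff[OF assms(1,2)] by simp
qed

lemma cinner_mat_adjoint:
  assumes "A \<in> carrier_mat n n" "u \<in> carrier_vec n" "v \<in> carrier_vec n"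
  shows "cinner (A *\<^sub>v u) v = cinner u (mat_adjoint A *\<^sub>v v)"
proof -
  have "cinner (A *\<^sub>v u) v = (\<Sum>i<n. \<Sum>k<n. cnj (A $$ (i,k)) * cnj (u $ k) * v $ i)"
    using assms unfolding cinner_def
    by (simp add: index_mult_mat_vec_sum[where n=n] sum_distrib_right mult.assoc del: index_mult_mat_vec)
  also have "\<dots> = (\<Sum>k<n. \<Sum>i<n. cnj (A $$ (i,k)) * cnj (u $ k) * v $ i)"
    by (rule sum.swap)
  also have "\<dots> = cinner u (mat_adjoint A *\<^sub>v v)"
    using assms unfolding cinner_def
    by (simp add: index_mult_mat_vec_sum[where n=n] sum_distrib_left mult.assoc mult.left_commute del: index_mult_mat_vec)
  finally show ?thesis .
qed

lemma cinner_smult_left: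
  assumes "dim_vec u = dim_vec v"
  shows "cinner (c \<cdot>\<^sub>v u) v = cnj c * cinner u v"
  unfolding cinner_def using assms by (simp add: sum_distrib_left mult.assoc)

lemma cinner_smult_right: "cinner u (c \<cdot>\<^sub>v v) = c * cinner u v"
  unfolding cinner_def by (simp add: sum_distrib_left mult.left_commute)

lemma cinner_diff_right:
  assumes "dim_vec a = dim_vec b"
  shows "cinner v (a - b) = cinner v a - cinner v b"
  using assms unfolding cinner_def by (simp add: right_diff_distrib sum_subtractf)

lemma op_bound_by_cinner:
  assumes A: "A \<in> carrier_mat n n" and c: "0 \<le> c"
    and bound: "\<And>u v. u \<in> carrier_vec n \<Longrightarrow> v \<in> carrier_vec n \<Longrightarrow> cmod (cinner u (A *\<^sub>v v)) \<le> c * vnorm u * vnorm v"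
  shows "op_bound n A c"
  unfolding op_bound_def
proof (intro conjI ballI)
  fix v :: "complex vec" assume v: "v \<in> carrier_vec n"
  define y where "y = A *\<^sub>v v"
  have "y \<in> carrier_vec n" unfolding y_def using A v by (intro mult_mat_vec_carrier[of _ n n]) auto
  then have le: "vnorm y * vnorm y \<le> (c * vnorm v) * vnorm y"
    using bound[OF _ v, of y] unfolding y_def[symmetric]
    by (simp add: cinner_self vnorm_def mult_ac)
  have "vnorm y \<le> c * vnorm v"
  proof (cases "vnorm y = 0")
    case True then show ?thesis using c by simp
  next
    case False then have "vnorm y > 0" using vnorm_nonneg[of y] by linarith
    then show ?thesis using le by (rule mult_right_le_imp_le[rotated])
  qed
  then show "vnorm (A *\<^sub>v v) \<le> c * vnorm v" unfolding y_def .
qed (use A c in simp_all)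

lemma op_bound_mat_adjoint:
  assumes "op_bound n A c"
  shows "op_bound n (mat_adjoint A) c"
proof (rule op_bound_by_cinner)
  have A: "A \<in> carrier_mat n n" using assms by (rule op_bound_carrier)
  then show "mat_adjoint A \<in> carrier_mat n n" by simp
  show "0 \<le> c" using assms unfolding op_bound_def by simp
  fix u v :: "complex vec" assume u: "u \<in> carrier_vec n" and v: "v \<in> carrier_vec n"
  have "cinner u (mat_adjoint A *\<^sub>v v) = cinner (A *\<^sub>v u) v"
    using cinner_mat_adjoint[OF A u v] by simp
  also have "cmod \<dots> \<le> vnorm (A *\<^sub>v u) * vnorm v" using A u v by (intro cinner_Cauchy_Schwarz) simp
  also have "\<dots> \<le> c * vnorm u * vnorm v" using op_boundD[OF assms u] by (intro mult_right_mono) auto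
  finally show "cmod (cinner u (mat_adjoint A *\<^sub>v v)) \<le> c * vnorm u * vnorm v" .
qed

lemma sqnorm_unitary_mult:
  assumes "unitary_mat n U" "v \<in> carrier_vec n"
  shows "sqnorm (U *\<^sub>v v) = sqnorm v"
proof -
  have U: "U \<in> carrier_mat n n" and UU: "mat_adjoint U * U = 1\<^sub>m n" using assms unitary_mat_def by auto
  have "cinner (U *\<^sub>v v) (U *\<^sub>v v) = cinner v (mat_adjoint U *\<^sub>v (U *\<^sub>v v))"
    using U assms by (intro cinner_mat_adjoint) auto
  also have "mat_adjoint U *\<^sub>v (U *\<^sub>v v) = (mat_adjoint U * U) *\<^sub>v v"
    using U assms by (subst assoc_mult_mat_vec) auto
  finally have "cinner (U *\<^sub>v v) (U *\<^sub>v v) = cinner v v" using UU assms by simp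
  then show ?thesis by (simp add: cinner_self)
qed

lemma unitary_mat_adjoint:
  assumes "unitary_mat n U"
  shows "unitary_mat n (mat_adjoint U)"
  using assms unfolding unitary_mat_def by (auto simp: mat_adjoint_adjoint)

lemma op_bound_unitary:
  assumes "unitary_mat n U"
  shows "op_bound n U 1"
  using assms sqnorm_unitary_mult[OF assms] unfolding op_bound_def unitary_mat_def vnorm_def by auto

definition quad_form :: "complex vec \<Rightarrow> complex mat \<Rightarrow> complex" where
  "quad_form v A = cinner v (A *\<^sub>v v)"

lemma quad_form_diff_le:
  assumes "op_bound n (A - B) c" "v \<in> carrier_vec n" "A \<in> carrier_mat n n" "B \<in> carrier_mat n n"
  shows "cmod (quad_form v A - quad_form v B) \<le> c * (vnorm v)^2"
proof -
  have "quad_form v A - quad_form v B = cinner v ((A - B) *\<^sub>v v)"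
    unfolding quad_form_def using assms by (simp add: minus_mult_distrib_mat_vec cinner_diff_right)
  also have "cmod \<dots> \<le> vnorm v * vnorm ((A - B) *\<^sub>v v)" using assms by (intro cinner_Cauchy_Schwarz) auto
  also have "\<dots> \<le> vnorm v * (c * vnorm v)" using op_boundD[OF assms(1,2)] by (intro mult_left_mono) auto
  finally show ?thesis by (simp add: power2_eq_square algebra_simps)
qed

lemma sqnorm_mult_eq_quad_form:
  assumes "A \<in> carrier_mat n n" "v \<in> carrier_vec n"
  shows "of_real (sqnorm (A *\<^sub>v v)) = quad_form v (mat_adjoint A * A)"
proof -
  have "of_real (sqnorm (A *\<^sub>v v)) = cinner (A *\<^sub>v v) (A *\<^sub>v v)" by (simp add: cinner_self)
  also have "\<dots> = cinner v (mat_adjoint A *\<^sub>v (A *\<^sub>v v))" using assms by (intro cinner_mat_adjoint) auto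
  also have "\<dots> = quad_form v (mat_adjoint A * A)" unfolding quad_form_def using assms
    by (subst assoc_mult_mat_vec[where n\<^sub>1=n and n\<^sub>2=n and n\<^sub>3=n]) auto
  finally show ?thesis .
qed

section \<open>Diagonal matrices and sandwich sums\<close>

definition diag_matrix :: "nat \<Rightarrow> (nat \<Rightarrow> complex) \<Rightarrow> complex mat" where
  "diag_matrix n d = mat n n (\<lambda>(i,j). if i = j then d i else 0)"

lemma diag_matrix_carrier[simp]: "diag_matrix n d \<in> carrier_mat n n" unfolding diag_matrix_def by auto
lemma dim_diag_matrix[simp]: "dim_row (diag_matrix n d) = n" "dim_col (diag_matrix n d) = n" unfolding diag_matrix_def by auto

lemma index_diag_matrix_mult_vec:
  assumes "v \<in> carrier_vec n" "i < n"
  shows "(diag_matrix n d *\<^sub>v v) $ i = d i * v $ i"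
proof -
  have "(diag_matrix n d *\<^sub>v v) $ i = (\<Sum>k<n. diag_matrix n d $$ (i,k) * v $ k)"
    using assms by (intro index_mult_mat_vec_sum) auto
  also have "\<dots> = (\<Sum>k\<in>{i}. d i * v $ k)"
    using assms by (intro sum.mono_neutral_cong_right) (auto simp: diag_matrix_def)
  finally show ?thesis by simp
qed

lemma sqnorm_diag_matrix_mult:
  assumes "v \<in> carrier_vec n"
  shows "sqnorm (diag_matrix n d *\<^sub>v v) = (\<Sum>i<n. (cmod (d i))^2 * (cmod (v $ i))^2)"
  unfolding sqnorm_def using assms by (simp add: index_diag_matrix_mult_vec norm_mult power_mult_distrib del: index_mult_mat_vec)

lemma op_bound_diag_matrix:
  assumes "\<And>i. i < n \<Longrightarrow> cmod (d i) \<le> c" "0 \<le> c"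
  shows "op_bound n (diag_matrix n d) c"
  unfolding op_bound_def
proof (intro conjI ballI)
  fix v :: "complex vec" assume v: "v \<in> carrier_vec n"
  have "sqnorm (diag_matrix n d *\<^sub>v v) \<le> (\<Sum>i<n. c^2 * (cmod (v $ i))^2)"
    unfolding sqnorm_diag_matrix_mult[OF v]
    by (intro sum_mono mult_right_mono power_mono) (use assms in auto)
  also have "\<dots> = c^2 * sqnorm v" using v by (simp add: sqnorm_def sum_distrib_left)
  finally have "sqrt (sqnorm (diag_matrix n d *\<^sub>v v)) \<le> sqrt (c^2 * sqnorm v)" by simp
  then show "vnorm (diag_matrix n d *\<^sub>v v) \<le> c * vnorm v" using assms by (simp add: vnorm_def real_sqrt_mult)
qed (use assms in auto)

lemma diag_matrix_diff: "diag_matrix n d - diag_matrix n e = diag_matrix n (\<lambda>i. d i - e i)"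
  by (rule eq_matI) (auto simp: diag_matrix_def)

lemma mat_adjoint_diag_matrix:
  assumes "\<And>i. cnj (d i) = d i"
  shows "mat_adjoint (diag_matrix n d) = diag_matrix n d"
  by (rule eq_matI) (auto simp: diag_matrix_def assms)

lemma diag_matrix_one: "diag_matrix n (\<lambda>i. 1) = 1\<^sub>m n"
  by (rule eq_matI) (auto simp: diag_matrix_def)

lemma index_diag_matrix_mult:
  assumes "A \<in> carrier_mat n n" "i < n" "j < n"
  shows "(diag_matrix n d * A) $$ (i,j) = d i * A $$ (i,j)"
proof -
  have "(diag_matrix n d * A) $$ (i,j) = (\<Sum>q<n. diag_matrix n d $$ (i,q) * A $$ (q,j))"
    using assms by (intro index_mult_mat_sum) auto
  also have "\<dots> = (\<Sum>q\<in>{i}. diag_matrix n d $$ (i,q) * A $$ (q,j))"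
    using assms by (intro sum.mono_neutral_cong_right) (auto simp: diag_matrix_def)
  finally show ?thesis using assms by (simp add: diag_matrix_def)
qed

lemma index_mult_diag_matrix:
  assumes "A \<in> carrier_mat n n" "i < n" "j < n"
  shows "(A * diag_matrix n d) $$ (i,j) = A $$ (i,j) * d j"
proof -
  have "(A * diag_matrix n d) $$ (i,j) = (\<Sum>q<n. A $$ (i,q) * diag_matrix n d $$ (q,j))"
    using assms by (intro index_mult_mat_sum) auto
  also have "\<dots> = (\<Sum>q\<in>{j}. A $$ (i,q) * diag_matrix n d $$ (q,j))"
    using assms by (intro sum.mono_neutral_cong_right) (auto simp: diag_matrix_def)
  finally show ?thesis using assms by (simp add: diag_matrix_def)
qed

lemma op_bound_scaled_entries:
  fixes A :: "complex mat" and c :: "nat \<Rightarrow> nat \<Rightarrow> complex" and e Cc :: real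
  assumes rows: "\<And>i. i < n \<Longrightarrow> (\<Sum>j<n. (cmod (A $$ (i,j)))^2) = 1"
    and cols: "\<And>j. j < n \<Longrightarrow> real (card {i. i < n \<and> A $$ (i,j) \<noteq> 0}) \<le> Cc"
    and c: "\<And>i j. i < n \<Longrightarrow> j < n \<Longrightarrow> A $$ (i,j) \<noteq> 0 \<Longrightarrow> cmod (c i j) \<le> e"
    and e: "0 \<le> e" and Cc: "0 \<le> Cc"
  shows "op_bound n (mat n n (\<lambda>(i,j). c i j * A $$ (i,j))) (e * sqrt Cc)"
  unfolding op_bound_def
proof (intro conjI ballI)
  define M where "M = mat n n (\<lambda>(i,j). c i j * A $$ (i,j))"
  fix v :: "complex vec" assume v: "v \<in> carrier_vec n"
  define w where "w i j = (if A $$ (i,j) \<noteq> 0 then e * cmod (v $ j) else 0)" for i j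
  have row: "(cmod ((M *\<^sub>v v) $ i))^2 \<le> (\<Sum>j<n. (w i j)^2)" if i: "i < n" for i
  proof -
    have "cmod ((M *\<^sub>v v) $ i) \<le> (\<Sum>j<n. cmod (M $$ (i,j) * v $ j))"
      using i v by (simp add: M_def index_mult_mat_vec_sum[where n=n] norm_sum del: index_mult_mat_vec)
    also have "\<dots> \<le> (\<Sum>j<n. \<bar>cmod (A $$ (i,j))\<bar> * \<bar>w i j\<bar>)"
    proof (rule sum_mono)
      fix j assume j: "j \<in> {..<n}"
      show "cmod (M $$ (i,j) * v $ j) \<le> \<bar>cmod (A $$ (i,j))\<bar> * \<bar>w i j\<bar>"
      proof (cases "A $$ (i,j) = 0")
        case True then show ?thesis using i j by (simp add: M_def w_def)
      next
        case False
        have "cmod (M $$ (i,j) * v $ j) = cmod (c i j) * cmod (A $$ (i,j)) * cmod (v $ j)"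
          using i j by (simp add: M_def norm_mult)
        also have "\<dots> \<le> e * cmod (A $$ (i,j)) * cmod (v $ j)"
          using c[OF i _ False] j by (intro mult_right_mono) auto
        finally show ?thesis using False e by (simp add: w_def mult_ac)
      qed
    qed
    also have "\<dots> \<le> L2_set (\<lambda>j. cmod (A $$ (i,j))) {..<n} * L2_set (w i) {..<n}"
      by (rule L2_set_mult_ineq)
    also have "L2_set (\<lambda>j. cmod (A $$ (i,j))) {..<n} = 1"
      unfolding L2_set_def using rows[OF i] by simp
    finally have "(cmod ((M *\<^sub>v v) $ i))^2 \<le> (L2_set (w i) {..<n})^2"
      by (intro power_mono) auto
    also have "\<dots> = (\<Sum>j<n. (w i j)^2)" unfolding L2_set_def by (simp add: sum_nonneg)
    finally show ?thesis .
  qed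
  have column: "(\<Sum>i<n. (w i j)^2) \<le> (e^2 * Cc) * (cmod (v $ j))^2" if j: "j < n" for j
  proof -
    have "(\<Sum>i<n. (w i j)^2) = real (card {i. i < n \<and> A $$ (i,j) \<noteq> 0}) * (e * cmod (v $ j))^2"
      unfolding w_def by (subst sum.mono_neutral_cong_right[of "{..<n}" "{i. i < n \<and> A $$ (i,j) \<noteq> 0}"]) auto
    also have "\<dots> \<le> Cc * (e * cmod (v $ j))^2" using cols[OF j] by (intro mult_right_mono) auto
    finally show ?thesis by (simp add: power_mult_distrib mult_ac)
  qed
  have dim: "dim_vec (M *\<^sub>v v) = n" by (simp add: M_def)
  have "sqnorm (M *\<^sub>v v) \<le> (\<Sum>i<n. \<Sum>j<n. (w i j)^2)"
    unfolding sqnorm_def dim by (intro sum_mono row) simp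
  also have "\<dots> = (\<Sum>j<n. \<Sum>i<n. (w i j)^2)" by (rule sum.swap)
  also have "\<dots> \<le> (\<Sum>j<n. (e^2 * Cc) * (cmod (v $ j))^2)" by (intro sum_mono column) auto
  also have "\<dots> = (e^2 * Cc) * sqnorm v" using v by (simp add: sqnorm_def sum_distrib_left)
  finally have "vnorm (M *\<^sub>v v) \<le> sqrt ((e^2 * Cc) * sqnorm v)" unfolding vnorm_def by simp
  also have "\<dots> = e * sqrt Cc * vnorm v" using e Cc by (simp add: vnorm_def real_sqrt_mult)
  finally show "vnorm (mat n n (\<lambda>(i,j). c i j * A $$ (i,j)) *\<^sub>v v) \<le> e * sqrt Cc * vnorm v"
    unfolding M_def .
qed (use e Cc in auto)

text \<open>The entrywise form of \<open>\<Sum>\<^sub>a\<^sub>\<in>\<^sub>S P\<^sub>a X P\<^sub>a\<close> with \<open>P\<^sub>a = weight_op n p a\<close>.\<close>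

definition sandwich_sum :: "nat \<Rightarrow> (nat \<Rightarrow> nat \<Rightarrow> real) \<Rightarrow> nat set \<Rightarrow> complex mat \<Rightarrow> complex mat" where
  "sandwich_sum n p S X = mat n n (\<lambda>(i,j). \<Sum>a\<in>S. of_real (p a i) * X $$ (i,j) * of_real (p a j))"

definition weight_op :: "nat \<Rightarrow> (nat \<Rightarrow> nat \<Rightarrow> real) \<Rightarrow> nat \<Rightarrow> complex mat" where
  "weight_op n p a = diag_matrix n (\<lambda>i. of_real (p a i))"

lemma sandwich_sum_carrier[simp]: "sandwich_sum n p S X \<in> carrier_mat n n" unfolding sandwich_sum_def by auto
lemma dim_sandwich_sum[simp]: "dim_row (sandwich_sum n p S X) = n" "dim_col (sandwich_sum n p S X) = n" unfolding sandwich_sum_def by auto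
lemma weight_op_carrier[simp]: "weight_op n p a \<in> carrier_mat n n" unfolding weight_op_def by auto
lemma dim_weight_op[simp]: "dim_row (weight_op n p a) = n" "dim_col (weight_op n p a) = n" unfolding weight_op_def by auto

lemma sandwich_sum_diff:
  assumes "X \<in> carrier_mat n n" "Y \<in> carrier_mat n n"
  shows "sandwich_sum n p S (X - Y) = sandwich_sum n p S X - sandwich_sum n p S Y"
  by (rule eq_matI) (use assms in \<open>auto simp: sandwich_sum_def algebra_simps sum_subtractf\<close>)

lemma sandwich_sum_diag_matrix:
  "sandwich_sum n p S (diag_matrix n d) = diag_matrix n (\<lambda>i. of_real (\<Sum>a\<in>S. (p a i)^2) * d i)"
  by (rule eq_matI) (auto simp: sandwich_sum_def diag_matrix_def sum_distrib_right sum_distrib_left power2_eq_square algebra_simps)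

lemma weight_op_sandwich:
  assumes "X \<in> carrier_mat n n"
  shows "weight_op n p a * X * weight_op n p a = sandwich_sum n p {a} X"
proof (rule eq_matI)
  fix i j assume "i < dim_row (sandwich_sum n p {a} X)" "j < dim_col (sandwich_sum n p {a} X)"
  then have ij: "i < n" "j < n" by auto
  have "weight_op n p a * X \<in> carrier_mat n n" using assms by (intro mult_carrier_mat) auto
  then have "(weight_op n p a * X * weight_op n p a) $$ (i,j) = (weight_op n p a * X) $$ (i,j) * of_real (p a j)"
    using ij unfolding weight_op_def by (rule index_mult_diag_matrix)
  also have "(weight_op n p a * X) $$ (i,j) = of_real (p a i) * X $$ (i,j)"
    using assms ij unfolding weight_op_def by (rule index_diag_matrix_mult)
  finally show "(weight_op n p a * X * weight_op n p a) $$ (i,j) = sandwich_sum n p {a} X $$ (i,j)"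
    using ij by (simp add: sandwich_sum_def)
qed (use assms in \<open>auto intro: mult_carrier_mat[of _ n n]\<close>)

lemma index_weight_op_mult_vec:
  assumes "v \<in> carrier_vec n" "i < n"
  shows "(weight_op n p a *\<^sub>v v) $ i = of_real (p a i) * v $ i"
  unfolding weight_op_def using index_diag_matrix_mult_vec[OF assms] .

lemma weight_op_mult_vec:
  assumes "v \<in> carrier_vec n"
  shows "weight_op n p a *\<^sub>v v = vec n (\<lambda>i. of_real (p a i) * v $ i)"
  by (rule eq_vecI) (use assms index_weight_op_mult_vec in auto)

lemma cinner_sandwich_sum:
  assumes "X \<in> carrier_mat n n" "v \<in> carrier_vec n" "w \<in> carrier_vec n"
  shows "cinner w (sandwich_sum n p S X *\<^sub>v v) = (\<Sum>a\<in>S. cinner (weight_op n p a *\<^sub>v w) (X *\<^sub>v (weight_op n p a *\<^sub>v v)))"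
proof -
  have "cinner w (sandwich_sum n p S X *\<^sub>v v) = (\<Sum>i<n. cnj (w $ i) * (\<Sum>k<n. sandwich_sum n p S X $$ (i,k) * v $ k))"
    unfolding cinner_def using assms by (simp add: index_mult_mat_vec_sum[where n=n] del: index_mult_mat_vec)
  also have "\<dots> = (\<Sum>i<n. \<Sum>k<n. \<Sum>a\<in>S. cnj (w $ i) * (of_real (p a i) * X $$ (i,k) * of_real (p a k) * v $ k))"
    by (simp add: sandwich_sum_def sum_distrib_left sum_distrib_right)
  also have "\<dots> = (\<Sum>a\<in>S. \<Sum>i<n. \<Sum>k<n. cnj (w $ i) * (of_real (p a i) * X $$ (i,k) * of_real (p a k) * v $ k))"
    by (simp add: sum.swap[of _ S])
  also have "\<dots> = (\<Sum>a\<in>S. cinner (weight_op n p a *\<^sub>v w) (X *\<^sub>v (weight_op n p a *\<^sub>v v)))"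
  proof (rule sum.cong[OF refl])
    fix a assume "a \<in> S"
    have "cinner (weight_op n p a *\<^sub>v w) (X *\<^sub>v (weight_op n p a *\<^sub>v v)) =
      (\<Sum>i<n. cnj (of_real (p a i) * w $ i) * (\<Sum>k<n. X $$ (i,k) * (of_real (p a k) * v $ k)))"
      unfolding cinner_def using assms
      by (simp add: index_mult_mat_vec_sum[where n=n] weight_op_mult_vec del: index_mult_mat_vec)
    also have "\<dots> = (\<Sum>i<n. \<Sum>k<n. cnj (w $ i) * (of_real (p a i) * X $$ (i,k) * of_real (p a k) * v $ k))"
      by (simp add: sum_distrib_left mult_ac)
    finally show "(\<Sum>i<n. \<Sum>k<n. cnj (w $ i) * (of_real (p a i) * X $$ (i,k) * of_real (p a k) * v $ k)) =
      cinner (weight_op n p a *\<^sub>v w) (X *\<^sub>v (weight_op n p a *\<^sub>v v))" by simp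
  qed
  finally show ?thesis .
qed

lemma sum_sqnorm_weight_op:
  assumes "y \<in> carrier_vec n"
  shows "(\<Sum>a\<in>S. sqnorm (weight_op n p a *\<^sub>v y)) = (\<Sum>i<n. (\<Sum>a\<in>S. (p a i)^2) * (cmod (y $ i))^2)"
proof -
  have "(\<Sum>a\<in>S. sqnorm (weight_op n p a *\<^sub>v y)) = (\<Sum>a\<in>S. \<Sum>i<n. (p a i)^2 * (cmod (y $ i))^2)"
    unfolding weight_op_def using assms by (simp add: sqnorm_diag_matrix_mult)
  also have "\<dots> = (\<Sum>i<n. (\<Sum>a\<in>S. (p a i)^2) * (cmod (y $ i))^2)"
    by (simp add: sum.swap[of _ S] sum_distrib_right)
  finally show ?thesis .
qed

lemma sum_sqnorm_weight_op_le:
  assumes "y \<in> carrier_vec n" "\<And>i. i < n \<Longrightarrow> (\<Sum>a\<in>S. (p a i)^2) \<le> 1"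
  shows "(\<Sum>a\<in>S. sqnorm (weight_op n p a *\<^sub>v y)) \<le> sqnorm y"
proof -
  have "(\<Sum>a\<in>S. sqnorm (weight_op n p a *\<^sub>v y)) \<le> (\<Sum>i<n. 1 * (cmod (y $ i))^2)"
    unfolding sum_sqnorm_weight_op[OF assms(1)] by (intro sum_mono mult_right_mono) (use assms in auto)
  also have "\<dots> = sqnorm y" using assms by (simp add: sqnorm_def)
  finally show ?thesis .
qed

lemma op_bound_sandwich_sum:
  assumes X: "op_bound n X c" and S: "finite S" and p: "\<And>i. i < n \<Longrightarrow> (\<Sum>a\<in>S. (p a i)^2) \<le> 1"
  shows "op_bound n (sandwich_sum n p S X) c"
proof (rule op_bound_by_cinner)
  show "sandwich_sum n p S X \<in> carrier_mat n n" by simp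
  show c: "0 \<le> c" using X unfolding op_bound_def by simp
  fix u v :: "complex vec" assume u: "u \<in> carrier_vec n" and v: "v \<in> carrier_vec n"
  let ?Pu = "\<lambda>a. weight_op n p a *\<^sub>v u" and ?Pv = "\<lambda>a. weight_op n p a *\<^sub>v v"
  have L2: "L2_set (\<lambda>a. vnorm (weight_op n p a *\<^sub>v w)) S \<le> vnorm w" if "w \<in> carrier_vec n" for w
    unfolding L2_set_def vnorm_square vnorm_def using sum_sqnorm_weight_op_le[OF that p] by simp
  have "cmod (cinner u (sandwich_sum n p S X *\<^sub>v v)) \<le> (\<Sum>a\<in>S. cmod (cinner (?Pu a) (X *\<^sub>v ?Pv a)))"
    unfolding cinner_sandwich_sum[OF op_bound_carrier[OF X] v u] by (rule norm_sum)
  also have "\<dots> \<le> (\<Sum>a\<in>S. vnorm (?Pu a) * (c * vnorm (?Pv a)))"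
  proof (rule sum_mono)
    fix a
    have "cmod (cinner (?Pu a) (X *\<^sub>v ?Pv a)) \<le> vnorm (?Pu a) * vnorm (X *\<^sub>v ?Pv a)"
      using op_bound_carrier[OF X] by (intro cinner_Cauchy_Schwarz) simp
    also have "\<dots> \<le> vnorm (?Pu a) * (c * vnorm (?Pv a))"
      using v by (intro mult_left_mono op_boundD[OF X] mult_mat_vec_carrier[of _ n n]) auto
    finally show "cmod (cinner (?Pu a) (X *\<^sub>v ?Pv a)) \<le> vnorm (?Pu a) * (c * vnorm (?Pv a))" .
  qed
  also have "\<dots> = c * (\<Sum>a\<in>S. \<bar>vnorm (?Pu a)\<bar> * \<bar>vnorm (?Pv a)\<bar>)"
    by (simp add: sum_distrib_left mult_ac)
  also have "\<dots> \<le> c * (L2_set (\<lambda>a. vnorm (?Pu a)) S * L2_set (\<lambda>a. vnorm (?Pv a)) S)"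
    by (intro mult_left_mono L2_set_mult_ineq c)
  also have "\<dots> \<le> c * (vnorm u * vnorm v)"
    by (intro mult_left_mono mult_mono L2 u v c) auto
  finally show "cmod (cinner u (sandwich_sum n p S X *\<^sub>v v)) \<le> c * vnorm u * vnorm v"
    by (simp add: mult_ac)
qed

section \<open>The operators \<open>P\<^sub>\<epsilon>\<close> and the pulled-back sums\<close>

definition cell_avg :: "nat \<Rightarrow> (nat \<Rightarrow> real \<Rightarrow> real) \<Rightarrow> nat \<Rightarrow> nat \<Rightarrow> real" where
  "cell_avg n chi a i = real n * integral (cell n i) (chi a)"

lemma Op_eq_weight_op: "Op n (chi a) = weight_op n (cell_avg n chi) a"
  unfolding Op_def weight_op_def diag_matrix_def cell_avg_def by (rule eq_matI) auto

lemma pow_mat_Suc_left: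
  assumes "A \<in> carrier_mat n n"
  shows "A ^\<^sub>m Suc k = A * A ^\<^sub>m k"
proof (induction k)
  case 0 then show ?case using assms by simp
next
  case (Suc k)
  have "A ^\<^sub>m Suc (Suc k) = (A * A ^\<^sub>m k) * A" using Suc by simp
  also have "\<dots> = A * (A ^\<^sub>m k * A)" using assms by (intro assoc_mult_mat[of _ n n _ n _ n]) auto
  finally show ?case by simp
qed

locale unitary_words =
  fixes n :: nat and U :: "complex mat" and chi :: "nat \<Rightarrow> real \<Rightarrow> real"
  assumes unitary_U: "unitary_mat n U"
begin

abbreviation "Uh \<equiv> mat_adjoint U"
abbreviation "p \<equiv> cell_avg n chi"

lemma U_carrier[simp]: "U \<in> carrier_mat n n"
  and Uh_mult_U[simp]: "Uh * U = 1\<^sub>m n"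
  and U_mult_Uh[simp]: "U * Uh = 1\<^sub>m n"
  using unitary_U unfolding unitary_mat_def by auto

lemma unitary_Uh: "unitary_mat n Uh" using unitary_mat_adjoint[OF unitary_U] .

lemma Uh_carrier[simp]: "Uh \<in> carrier_mat n n" by simp
lemma dim_U[simp]: "dim_row U = n" "dim_col U = n" using U_carrier carrier_matD by blast+
lemma mat_adjoint_Uh[simp]: "mat_adjoint Uh = U" using U_carrier by (rule mat_adjoint_adjoint)
lemma mult_carrier[simp]: "A \<in> carrier_mat n n \<Longrightarrow> B \<in> carrier_mat n n \<Longrightarrow> A * B \<in> carrier_mat n n"
  by (rule mult_carrier_mat)
lemma assoc_mult[simp]: "A \<in> carrier_mat n n \<Longrightarrow> B \<in> carrier_mat n n \<Longrightarrow> C \<in> carrier_mat n n \<Longrightarrow> (A * B) * C = A * (B * C)"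
  by (rule assoc_mult_mat[of _ n n _ n _ n])
lemma Uh_mult_U_mult[simp]: "X \<in> carrier_mat n n \<Longrightarrow> Uh * (U * X) = X"
  by (simp flip: assoc_mult)
lemma U_mult_Uh_mult[simp]: "X \<in> carrier_mat n n \<Longrightarrow> U * (Uh * X) = X"
  by (simp flip: assoc_mult)
lemma mult_vec_carrier[simp]: "A \<in> carrier_mat n n \<Longrightarrow> v \<in> carrier_vec n \<Longrightarrow> A *\<^sub>v v \<in> carrier_vec n"
  by (rule mult_mat_vec_carrier)

lemma Pt_carrier[simp]: "Pt n U chi a j \<in> carrier_mat n n"
  unfolding Pt_def Op_eq_weight_op by (intro mult_carrier_mat[of _ n n]) auto

lemma Pw_carrier[simp]: "Pw_from n U chi j w \<in> carrier_mat n n"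
  by (induction w arbitrary: j) (auto intro: mult_carrier_mat[of _ n n])

lemma Pword_carrier[simp]: "Pword n U chi w \<in> carrier_mat n n"
  unfolding Pword_def by simp

lemma Pt_0: "Pt n U chi a 0 = weight_op n p a"
proof -
  have "dim_row Uh = n" by simp
  then show ?thesis unfolding Pt_def Op_eq_weight_op by simp
qed

lemma Pt_Suc: "Pt n U chi a (Suc j) = Uh * Pt n U chi a j * U"
proof -
  have "Pt n U chi a (Suc j) = (Uh * Uh ^\<^sub>m j) * Op n (chi a) * (U ^\<^sub>m j * U)"
    unfolding Pt_def using pow_mat_Suc_left[OF Uh_carrier] by simp
  also have "\<dots> = Uh * (Uh ^\<^sub>m j * Op n (chi a) * U ^\<^sub>m j) * U"
    unfolding Op_eq_weight_op by simp
  finally show ?thesis unfolding Pt_def .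
qed

lemma conj_mult:
  assumes "X \<in> carrier_mat n n" "Y \<in> carrier_mat n n"
  shows "(Uh * X * U) * (Uh * Y * U) = Uh * (X * Y) * U"
proof -
  have "(Uh * X * U) * (Uh * Y * U) = Uh * X * (U * Uh) * Y * U"
    using assms by simp
  also have "\<dots> = Uh * (X * Y) * U" using assms by simp
  finally show ?thesis .
qed

lemma Pw_from_Suc: "Pw_from n U chi (Suc j) w = Uh * Pw_from n U chi j w * U"
proof (induction w arbitrary: j)
  case Nil then show ?case by simp
next
  case (Cons a w)
  have "Pw_from n U chi (Suc j) (a # w) = Pw_from n U chi (Suc (Suc j)) w * Pt n U chi a (Suc j)" by simp
  also have "\<dots> = (Uh * Pw_from n U chi (Suc j) w * U) * (Uh * Pt n U chi a j * U)"
    using Cons Pt_Suc by simp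
  also have "\<dots> = Uh * (Pw_from n U chi (Suc j) w * Pt n U chi a j) * U" by (rule conj_mult) auto
  finally show ?case by simp
qed

lemma Pword_Cons: "Pword n U chi (a # w) = (Uh * Pword n U chi w * U) * weight_op n p a"
  unfolding Pword_def using Pw_from_Suc Pt_0 by simp

lemma mat_adjoint_weight_op: "mat_adjoint (weight_op n p a) = weight_op n p a"
  unfolding weight_op_def by (rule mat_adjoint_diag_matrix) simp

lemma mat_adjoint_conj:
  assumes "X \<in> carrier_mat n n"
  shows "mat_adjoint (Uh * X * U) = Uh * mat_adjoint X * U"
  using assms by (simp add: mat_adjoint_mult[of _ n] mat_adjoint_adjoint assoc_mult_mat[of _ n n _ n _ n])

lemma gram_Pword_Cons: "mat_adjoint (Pword n U chi (a # w)) * Pword n U chi (a # w)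
   = sandwich_sum n p {a} (Uh * (mat_adjoint (Pword n U chi w) * Pword n U chi w) * U)"
proof -
  define X where "X = Pword n U chi w"
  have X: "X \<in> carrier_mat n n" unfolding X_def by simp
  have "mat_adjoint (Pword n U chi (a # w)) * Pword n U chi (a # w)
     = (weight_op n p a * (Uh * mat_adjoint X * U)) * ((Uh * X * U) * weight_op n p a)"
    unfolding Pword_Cons X_def[symmetric] using X
    by (simp add: mat_adjoint_mult[of _ n] mat_adjoint_weight_op mat_adjoint_conj)
  also have "\<dots> = weight_op n p a * ((Uh * mat_adjoint X * U) * (Uh * X * U)) * weight_op n p a"
    using X by simp
  also have "\<dots> = weight_op n p a * (Uh * (mat_adjoint X * X) * U) * weight_op n p a"
    using X by (simp add: conj_mult)
  also have "\<dots> = sandwich_sum n p {a} (Uh * (mat_adjoint X * X) * U)"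
    by (rule weight_op_sandwich) (use X in simp)
  finally show ?thesis unfolding X_def .
qed

lemma mat_adjoint_Pword_Cons: "mat_adjoint (Pword n U chi (a # w)) = weight_op n p a * (Uh * mat_adjoint (Pword n U chi w) * U)"
  unfolding Pword_Cons using mat_adjoint_weight_op by (simp add: mat_adjoint_mult[of _ n] mat_adjoint_conj)

end

lemma words_0: "words l 0 = {[]}" unfolding words_def by auto

lemma words_Suc: "words l (Suc j) = (\<lambda>(a,w). a # w) ` ({1..l} \<times> words l j)"
proof
  show "words l (Suc j) \<subseteq> (\<lambda>(a,w). a # w) ` ({1..l} \<times> words l j)"
  proof
    fix x assume "x \<in> words l (Suc j)"
    then obtain a w where "x = a # w" "a \<in> {1..l}" "w \<in> words l j"
      unfolding words_def by (cases x) auto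
    then show "x \<in> (\<lambda>(a,w). a # w) ` ({1..l} \<times> words l j)" by force
  qed
qed (auto simp: words_def)

lemma finite_words[simp]: "finite (words l j)"
  by (induction j) (auto simp: words_0 words_Suc)

lemma sum_words_Suc: "(\<Sum>w\<in>words l (Suc j). f w) = (\<Sum>a\<in>{1..l}. \<Sum>w\<in>words l j. f (a # w))"
proof -
  have "(\<Sum>w\<in>words l (Suc j). f w) = (\<Sum>x\<in>{1..l} \<times> words l j. f ((\<lambda>(a,w). a # w) x))"
    unfolding words_Suc by (subst sum.reindex) (auto simp: inj_on_def)
  also have "\<dots> = (\<Sum>a\<in>{1..l}. \<Sum>w\<in>words l j. f (a # w))"
    by (simp add: sum.cartesian_product split_def)
  finally show ?thesis .
qed

primrec pull_gram :: "nat \<Rightarrow> complex mat \<Rightarrow> (nat \<Rightarrow> real \<Rightarrow> real) \<Rightarrow> nat \<Rightarrow> nat list \<Rightarrow> nat \<Rightarrow> complex mat" where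
  "pull_gram n U chi l e 0 = mat_adjoint (Pword n U chi e) * Pword n U chi e"
| "pull_gram n U chi l e (Suc j) = sandwich_sum n (cell_avg n chi) {1..l} (mat_adjoint U * pull_gram n U chi l e j * U)"

context unitary_words begin

lemma pull_gram_carrier[simp]: "pull_gram n U chi l e j \<in> carrier_mat n n"
  by (induction j) auto

lemma quad_form_conj:
  assumes "W \<in> carrier_mat n n" "z \<in> carrier_vec n"
  shows "quad_form (U *\<^sub>v z) W = quad_form z (Uh * W * U)"
proof -
  have "quad_form (U *\<^sub>v z) W = cinner (U *\<^sub>v z) (W *\<^sub>v (U *\<^sub>v z))" unfolding quad_form_def ..
  also have "\<dots> = cinner z (Uh *\<^sub>v (W *\<^sub>v (U *\<^sub>v z)))" using assms by (intro cinner_mat_adjoint) auto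
  also have "Uh *\<^sub>v (W *\<^sub>v (U *\<^sub>v z)) = (Uh * W * U) *\<^sub>v z"
    using assms by (simp add: assoc_mult_mat_vec[of _ n n _ n _])
  finally show ?thesis unfolding quad_form_def .
qed

lemma quad_form_sandwich_sum:
  assumes "M \<in> carrier_mat n n" "v \<in> carrier_vec n"
  shows "quad_form v (sandwich_sum n p S M) = (\<Sum>a\<in>S. quad_form (weight_op n p a *\<^sub>v v) M)"
  unfolding quad_form_def using cinner_sandwich_sum[OF assms(1,2,2)] by simp

lemma sum_words_sqnorm_eq_quad_form:
  assumes "v \<in> carrier_vec n"
  shows "of_real (\<Sum>w\<in>words l j. sqnorm (Pword n U chi (w @ e) *\<^sub>v v)) = quad_form v (pull_gram n U chi l e j)"
  using assms
proof (induction j arbitrary: v)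
  case 0 then show ?case by (simp add: words_0 sqnorm_mult_eq_quad_form[of _ n])
next
  case (Suc j)
  have "(\<Sum>w\<in>words l (Suc j). sqnorm (Pword n U chi (w @ e) *\<^sub>v v))
     = (\<Sum>a\<in>{1..l}. \<Sum>w\<in>words l j. sqnorm (Pword n U chi (a # (w @ e)) *\<^sub>v v))"
    by (simp add: sum_words_Suc)
  also have "\<dots> = (\<Sum>a\<in>{1..l}. \<Sum>w\<in>words l j. sqnorm (Pword n U chi (w @ e) *\<^sub>v (U *\<^sub>v (weight_op n p a *\<^sub>v v))))"
  proof (intro sum.cong refl)
    fix a w
    have "Pword n U chi (a # (w @ e)) *\<^sub>v v = Uh *\<^sub>v (Pword n U chi (w @ e) *\<^sub>v (U *\<^sub>v (weight_op n p a *\<^sub>v v)))"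
      unfolding Pword_Cons using Suc.prems by (simp add: assoc_mult_mat_vec[of _ n n _ n _])
    then show "sqnorm (Pword n U chi (a # (w @ e)) *\<^sub>v v) = sqnorm (Pword n U chi (w @ e) *\<^sub>v (U *\<^sub>v (weight_op n p a *\<^sub>v v)))"
      using sqnorm_unitary_mult[OF unitary_Uh] Suc.prems by simp
  qed
  finally have "of_real (\<Sum>w\<in>words l (Suc j). sqnorm (Pword n U chi (w @ e) *\<^sub>v v))
     = (\<Sum>a\<in>{1..l}. of_real (\<Sum>w\<in>words l j. sqnorm (Pword n U chi (w @ e) *\<^sub>v (U *\<^sub>v (weight_op n p a *\<^sub>v v)))))"
    by simp
  also have "\<dots> = (\<Sum>a\<in>{1..l}. quad_form (U *\<^sub>v (weight_op n p a *\<^sub>v v)) (pull_gram n U chi l e j))"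
    using Suc by simp
  also have "\<dots> = (\<Sum>a\<in>{1..l}. quad_form (weight_op n p a *\<^sub>v v) (Uh * pull_gram n U chi l e j * U))"
    using Suc.prems by (simp add: quad_form_conj)
  also have "\<dots> = quad_form v (pull_gram n U chi l e (Suc j))"
    using Suc.prems by (simp add: quad_form_sandwich_sum)
  finally show ?case .
qed

lemma op_bound_Pword:
  assumes "\<And>a i. a \<in> set w \<Longrightarrow> i < n \<Longrightarrow> \<bar>p a i\<bar> \<le> 1"
  shows "op_bound n (Pword n U chi w) 1"
  using assms
proof (induction w)
  case Nil
  have "op_bound n (diag_matrix n (\<lambda>i. 1)) 1" by (rule op_bound_diag_matrix) auto
  then show ?case by (simp add: Pword_def diag_matrix_one)
next
  case (Cons a w)
  have P: "op_bound n (weight_op n p a) 1" unfolding weight_op_def by (rule op_bound_diag_matrix) (use Cons.prems in auto)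
  have "op_bound n (Uh * Pword n U chi w * U * weight_op n p a) (1 * 1 * 1 * 1)"
    by (intro op_bound_mult op_bound_unitary unitary_Uh unitary_U P Cons.IH) (use Cons.prems in auto)
  then show ?case unfolding Pword_Cons by simp
qed

definition star_pull_sum :: "nat \<Rightarrow> nat list \<Rightarrow> nat \<Rightarrow> complex vec \<Rightarrow> real" where
  "star_pull_sum l e j v = (\<Sum>w\<in>words l j. sqnorm (mat_adjoint (Pword n U chi (w @ e)) *\<^sub>v v))"

lemma star_pull_sum_Suc:
  assumes "v \<in> carrier_vec n"
  shows "star_pull_sum l e (Suc j) v = (\<Sum>w\<in>words l j. \<Sum>a\<in>{1..l}.
      sqnorm (weight_op n p a *\<^sub>v (Uh *\<^sub>v (mat_adjoint (Pword n U chi (w @ e)) *\<^sub>v (U *\<^sub>v v)))))"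
proof -
  have "star_pull_sum l e (Suc j) v = (\<Sum>a\<in>{1..l}. \<Sum>w\<in>words l j. sqnorm (mat_adjoint (Pword n U chi (a # (w @ e))) *\<^sub>v v))"
    unfolding star_pull_sum_def by (simp add: sum_words_Suc)
  also have "\<dots> = (\<Sum>a\<in>{1..l}. \<Sum>w\<in>words l j.
      sqnorm (weight_op n p a *\<^sub>v (Uh *\<^sub>v (mat_adjoint (Pword n U chi (w @ e)) *\<^sub>v (U *\<^sub>v v)))))"
    unfolding mat_adjoint_Pword_Cons using assms by (simp add: assoc_mult_mat_vec[of _ n n _ n _])
  also have "\<dots> = (\<Sum>w\<in>words l j. \<Sum>a\<in>{1..l}.
      sqnorm (weight_op n p a *\<^sub>v (Uh *\<^sub>v (mat_adjoint (Pword n U chi (w @ e)) *\<^sub>v (U *\<^sub>v v)))))"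
    by (rule sum.swap)
  finally show ?thesis .
qed

end

section \<open>Cell averages of the smoothed partition\<close>

definition cell_mid :: "nat \<Rightarrow> nat \<Rightarrow> real" where "cell_mid n i = (real i + 1/2) / real n"

lemma cell_cbox: "cell n i = cbox (real i / real n) (real (i+1) / real n)"
  unfolding cell_def by simp

lemma measure_cell:
  assumes "n > 0"
  shows "measure lborel (cell n i) = 1 / real n"
  using assms unfolding cell_def by (simp add: divide_simps)

lemma measure_cell_interval[simp]:
  assumes "n > 0"
  shows "measure lborel {real i / real n..(1 + real i) / real n} = 1 / real n"
  using assms by (simp add: divide_simps)

lemma dist_cell_mid:
  assumes "n > 0" "y \<in> cell n i"
  shows "\<bar>y - cell_mid n i\<bar> \<le> 1 / (2 * real n)"
  using assms unfolding cell_def cell_mid_def by (auto simp: divide_simps abs_if)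

definition sample_op :: "nat \<Rightarrow> (real \<Rightarrow> real) \<Rightarrow> complex mat" where
  "sample_op n g = diag_matrix n (\<lambda>i. of_real (g (cell_mid n i)))"

lemma cell_mid_in_unit: "n > 0 \<Longrightarrow> i < n \<Longrightarrow> cell_mid n i \<in> {0..1}"
  unfolding cell_mid_def by (auto simp: divide_simps)

lemma integrable_const_cell: "(\<lambda>x. c) integrable_on cell n i"
  by (simp only: cell_cbox integrable_const)

lemma lipschitz_continuous_on:
  assumes "\<And>x y. \<bar>f x - f y\<bar> \<le> K * \<bar>x - y\<bar>" "0 \<le> K"
  shows "continuous_on S (f :: real \<Rightarrow> real)"
  by (rule lipschitz_on_continuous_on[of K]) (use assms in \<open>auto intro!: lipschitz_onI simp: dist_real_def\<close>)

lemma integrable_on_cell: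
  assumes "continuous_on UNIV (f :: real \<Rightarrow> real)"
  shows "f integrable_on cell n i"
  unfolding cell_def by (rule integrable_continuous_interval) (use assms continuous_on_subset in blast)

locale lipschitz_partition =
  fixes l :: nat and chi :: "nat \<Rightarrow> real \<Rightarrow> real" and K :: real
  assumes K_pos: "K > 0"
    and chi_lipschitz: "\<And>a x y. a \<in> {1..l} \<Longrightarrow> \<bar>chi a x - chi a y\<bar> \<le> K * \<bar>x - y\<bar>"
    and sum_chi_square: "\<And>x. (\<Sum>a\<in>{1..l}. (chi a x)^2) = 1"
begin

lemma abs_chi_le_1:
  assumes "a \<in> {1..l}"
  shows "\<bar>chi a x\<bar> \<le> 1"
proof -
  have "(chi a x)^2 \<le> (\<Sum>b\<in>{1..l}. (chi b x)^2)"
    using assms by (intro member_le_sum) auto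
  then have "(chi a x)^2 \<le> 1^2" using sum_chi_square by simp
  then show ?thesis by (simp add: abs_square_le_1[symmetric])
qed

lemma continuous_on_chi:
  assumes "a \<in> {1..l}"
  shows "continuous_on UNIV (chi a)"
  by (rule lipschitz_continuous_on[of _ K]) (use chi_lipschitz[OF assms] K_pos in auto)

lemma integrable_chi:
  assumes "a \<in> {1..l}"
  shows "chi a integrable_on cell n i"
  by (rule integrable_on_cell[OF continuous_on_chi[OF assms]])

lemma integrable_chi_square:
  assumes "a \<in> {1..l}"
  shows "(\<lambda>x. (chi a x)^2) integrable_on cell n i"
  by (rule integrable_on_cell) (intro continuous_intros continuous_on_chi[OF assms])

lemma cell_avg_approx:
  assumes "n > 0" "a \<in> {1..l}"
  shows "\<bar>cell_avg n chi a i - chi a (cell_mid n i)\<bar> \<le> K / real n"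
proof -
  let ?c = "chi a (cell_mid n i)"
  have int: "(\<lambda>y. chi a y - ?c) integrable_on cell n i"
    by (rule integrable_diff[OF integrable_chi[OF assms(2)] integrable_const_cell])
  have "integral (cell n i) (\<lambda>y. chi a y - ?c) = integral (cell n i) (chi a) - ?c / real n"
    using integrable_chi[OF assms(2)] assms(1)
    by (subst integral_diff) (auto simp: cell_cbox measure_cell[symmetric, OF assms(1)] simp del: content_real_if)
  then have "real n * integral (cell n i) (\<lambda>y. chi a y - ?c) = real n * integral (cell n i) (chi a) - real n * (?c / real n)"
    by (simp add: right_diff_distrib)
  then have eq: "cell_avg n chi a i - ?c = real n * integral (cell n i) (\<lambda>y. chi a y - ?c)"
    using assms(1) unfolding cell_avg_def by simp
  have "norm (integral (cell n i) (\<lambda>y. chi a y - ?c)) \<le> (K / (2 * real n)) * measure lborel (cbox (real i / real n) (real (i+1) / real n))"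
  proof (rule has_integral_bound)
    show "((\<lambda>y. chi a y - ?c) has_integral integral (cell n i) (\<lambda>y. chi a y - ?c)) (cbox (real i / real n) (real (i+1) / real n))"
      using int unfolding cell_cbox by (rule integrable_integral)
    fix y assume "y \<in> cbox (real i / real n) (real (i+1) / real n)"
    then have "y \<in> cell n i" unfolding cell_cbox .
    then have "\<bar>y - cell_mid n i\<bar> \<le> 1 / (2 * real n)" using dist_cell_mid[OF assms(1)] by blast
    then have "K * \<bar>y - cell_mid n i\<bar> \<le> K * (1 / (2 * real n))" using K_pos by (intro mult_left_mono) auto
    then show "norm (chi a y - ?c) \<le> K / (2 * real n)" using chi_lipschitz[OF assms(2), of y "cell_mid n i"] by simp
  qed (use K_pos in simp)
  also have "measure lborel (cbox (real i / real n) (real (i+1) / real n)) = 1 / real n"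
    using measure_cell[OF assms(1)] unfolding cell_cbox .
  finally have "\<bar>integral (cell n i) (\<lambda>y. chi a y - ?c)\<bar> \<le> K / (2 * real n) * (1 / real n)" by simp
  then have "\<bar>cell_avg n chi a i - ?c\<bar> \<le> real n * (K / (2 * real n) * (1 / real n))"
    unfolding eq abs_mult abs_of_nat using assms(1) by (intro mult_left_mono) auto
  also have "\<dots> = K / (2 * real n)" using assms(1) by simp
  also have "\<dots> \<le> K / real n" using K_pos assms(1) by (simp add: divide_simps)
  finally show ?thesis .
qed

lemma cell_avg_square_le:
  assumes "n > 0" "a \<in> {1..l}"
  shows "(cell_avg n chi a i)^2 \<le> real n * integral (cell n i) (\<lambda>x. (chi a x)^2)"
proof -
  let ?I1 = "integral (cell n i) (chi a)" and ?I2 = "integral (cell n i) (\<lambda>x. (chi a x)^2)"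
  let ?c = "real n * ?I1"
  have i1: "chi a integrable_on cell n i" by (rule integrable_chi[OF assms(2)])
  have i2: "(\<lambda>x. (chi a x)^2) integrable_on cell n i" by (rule integrable_chi_square[OF assms(2)])
  have ic: "(\<lambda>x. 2 * ?c * chi a x) integrable_on cell n i" using integrable_on_cmult_left[OF i1, of "2 * ?c"] by simp
  have icc: "(\<lambda>x. ?c^2) integrable_on cell n i" by (rule integrable_const_cell)
  have "0 \<le> integral (cell n i) (\<lambda>x. (chi a x - ?c)^2)"
    by (intro integral_nonneg integrable_on_cell continuous_on_power continuous_on_diff continuous_on_chi[OF assms(2)] continuous_on_const) auto
  also have "(\<lambda>x. (chi a x - ?c)^2) = (\<lambda>x. ((chi a x)^2 - 2 * ?c * chi a x) + ?c^2)"
    by (auto simp: power2_eq_square algebra_simps)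
  also have "integral (cell n i) \<dots> = (?I2 - 2 * ?c * ?I1) + ?c^2 / real n"
    using i1 i2 ic icc assms(1)
    by (simp add: integral_add integral_diff integrable_diff cell_cbox measure_cell[symmetric, OF assms(1)] del: content_real_if)
  finally have "0 \<le> ?I2 - 2 * ?c * ?I1 + ?c^2 / real n" .
  then have "0 \<le> ?I2 - real n * ?I1^2" using assms(1) by (simp add: power2_eq_square field_simps)
  then show ?thesis unfolding cell_avg_def using assms(1) by (simp add: power2_eq_square algebra_simps)
qed

lemma sum_cell_avg_square_le_1:
  assumes "n > 0"
  shows "(\<Sum>a\<in>{1..l}. (cell_avg n chi a i)^2) \<le> 1"
proof -
  have "(\<Sum>a\<in>{1..l}. (cell_avg n chi a i)^2) \<le> (\<Sum>a\<in>{1..l}. real n * integral (cell n i) (\<lambda>x. (chi a x)^2))"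
    by (intro sum_mono cell_avg_square_le assms) auto
  also have "\<dots> = real n * (\<Sum>a\<in>{1..l}. integral (cell n i) (\<lambda>x. (chi a x)^2))"
    by (simp add: sum_distrib_left)
  also have "\<dots> = real n * integral (cell n i) (\<lambda>x. \<Sum>a\<in>{1..l}. (chi a x)^2)"
    by (subst integral_sum) (auto intro: integrable_chi_square)
  also have "\<dots> = 1" using assms unfolding sum_chi_square by (simp add: cell_cbox divide_simps)
  finally show ?thesis .
qed

lemma sum_subset_cell_avg_square_le_1:
  assumes "n > 0" "A \<subseteq> {1..l}"
  shows "(\<Sum>a\<in>A. (cell_avg n chi a i)^2) \<le> 1"
proof -
  have "(\<Sum>a\<in>A. (cell_avg n chi a i)^2) \<le> (\<Sum>a\<in>{1..l}. (cell_avg n chi a i)^2)"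
    using assms by (intro sum_mono2) auto
  then show ?thesis using sum_cell_avg_square_le_1[OF assms(1), of i] by (rule order_trans)
qed

lemma abs_cell_avg_le_1:
  assumes "n > 0" "a \<in> {1..l}"
  shows "\<bar>cell_avg n chi a i\<bar> \<le> 1"
proof -
  have "(cell_avg n chi a i)^2 \<le> 1^2" using sum_subset_cell_avg_square_le_1[OF assms(1), of "{a}"] assms(2) by simp
  then show ?thesis by (simp add: abs_square_le_1[symmetric])
qed

lemma cell_avg_square_approx:
  assumes "n > 0" "a \<in> {1..l}"
  shows "\<bar>(cell_avg n chi a i)^2 - (chi a (cell_mid n i))^2\<bar> \<le> 2 * K / real n"
proof -
  have "\<bar>(cell_avg n chi a i)^2 - (chi a (cell_mid n i))^2\<bar> = \<bar>cell_avg n chi a i - chi a (cell_mid n i)\<bar> * \<bar>cell_avg n chi a i + chi a (cell_mid n i)\<bar>"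
    by (simp add: power2_eq_square algebra_simps flip: abs_mult)
  also have "\<dots> \<le> (K / real n) * 2"
  proof (rule mult_mono)
    have "\<bar>cell_avg n chi a i + chi a (cell_mid n i)\<bar> \<le> \<bar>cell_avg n chi a i\<bar> + \<bar>chi a (cell_mid n i)\<bar>" by (rule abs_triangle_ineq)
    then show "\<bar>cell_avg n chi a i + chi a (cell_mid n i)\<bar> \<le> 2" using abs_cell_avg_le_1[OF assms, of i] abs_chi_le_1[OF assms(2), of "cell_mid n i"] by linarith
  qed (use cell_avg_approx[OF assms] K_pos assms(1) in auto)
  finally show ?thesis by (simp add: mult.commute)
qed

lemma sum_cell_avg_square_ge:
  assumes "n > 0"
  shows "1 - real l * (2 * K / real n) \<le> (\<Sum>a\<in>{1..l}. (cell_avg n chi a i)^2)"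
proof -
  have "(\<Sum>a\<in>{1..l}. (chi a (cell_mid n i))^2) - (\<Sum>a\<in>{1..l}. (cell_avg n chi a i)^2) \<le> (\<Sum>a\<in>{1..l}. 2 * K / real n)"
    unfolding sum_subtractf[symmetric]
  proof (intro sum_mono)
    fix a assume "a \<in> {1..l}"
    from cell_avg_square_approx[OF assms this, of i] show "(chi a (cell_mid n i))^2 - (cell_avg n chi a i)^2 \<le> 2 * K / real n" by linarith
  qed
  then show ?thesis using sum_chi_square by simp
qed

end

section \<open>The expanding map\<close>

text \<open>The condition \<open>g 0 = g 1\<close> is what survives composition with \<open>T_ext\<close>, which
  jumps back from 1 to 0 at the branch endpoints.\<close>

definition circle_lipschitz :: "(real \<Rightarrow> real) \<Rightarrow> real \<Rightarrow> bool" where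
  "circle_lipschitz g L \<longleftrightarrow> 0 \<le> L \<and> (\<forall>x\<in>{0..1}. \<forall>y\<in>{0..1}. \<bar>g x - g y\<bar> \<le> L * \<bar>x - y\<bar>) \<and>
     (\<forall>x\<in>{0..1}. \<bar>g x\<bar> \<le> 1) \<and> g 0 = g 1"

lemma circle_lipschitzD:
  assumes "circle_lipschitz g L"
  shows "0 \<le> L" "\<And>x y. x \<in> {0..1} \<Longrightarrow> y \<in> {0..1} \<Longrightarrow> \<bar>g x - g y\<bar> \<le> L * \<bar>x - y\<bar>"
    "\<And>x. x \<in> {0..1} \<Longrightarrow> \<bar>g x\<bar> \<le> 1" "g 0 = g 1"
  using assms unfolding circle_lipschitz_def by auto

lemma circle_lipschitz_mono: "circle_lipschitz g L \<Longrightarrow> L \<le> L' \<Longrightarrow> circle_lipschitz g L'"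
  unfolding circle_lipschitz_def by (meson abs_ge_zero mult_right_mono order_trans)

lemma circle_lipschitz_mult:
  assumes f: "circle_lipschitz f Lf" and h: "circle_lipschitz h Lh"
  shows "circle_lipschitz (\<lambda>x. f x * h x) (Lf + Lh)"
  unfolding circle_lipschitz_def
proof (intro conjI ballI)
  show "0 \<le> Lf + Lh" using circle_lipschitzD(1)[OF f] circle_lipschitzD(1)[OF h] by simp
  fix x y :: real assume x: "x \<in> {0..1}" and y: "y \<in> {0..1}"
  have "\<bar>f x * h x - f y * h y\<bar> = \<bar>f x * (h x - h y) + h y * (f x - f y)\<bar>" by (simp add: algebra_simps)
  also have "\<dots> \<le> \<bar>f x\<bar> * \<bar>h x - h y\<bar> + \<bar>h y\<bar> * \<bar>f x - f y\<bar>" by (simp add: abs_mult[symmetric] abs_triangle_ineq)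
  also have "\<dots> \<le> 1 * (Lh * \<bar>x - y\<bar>) + 1 * (Lf * \<bar>x - y\<bar>)"
    using circle_lipschitzD[OF f] circle_lipschitzD[OF h] x y by (intro add_mono mult_mono) auto
  finally show "\<bar>f x * h x - f y * h y\<bar> \<le> (Lf + Lh) * \<bar>x - y\<bar>" by (simp add: algebra_simps)
next
  fix x :: real assume x: "x \<in> {0..1}"
  have "\<bar>f x * h x\<bar> \<le> 1 * 1" unfolding abs_mult using circle_lipschitzD[OF f] circle_lipschitzD[OF h] x by (intro mult_mono) auto
  then show "\<bar>f x * h x\<bar> \<le> 1" by simp
next
  show "f 0 * h 0 = f 1 * h 1" using circle_lipschitzD(4)[OF f] circle_lipschitzD(4)[OF h] by simp
qed

lemma circle_lipschitz_one: "circle_lipschitz (\<lambda>x. 1) 0" unfolding circle_lipschitz_def by simp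

lemma card_integer_window_le:
  assumes "0 \<le> R"
  shows "real (card {i::nat. i < n \<and> \<bar>real i - c\<bar> \<le> R}) \<le> 2 * R + 1"
proof -
  let ?S = "{i::nat. i < n \<and> \<bar>real i - c\<bar> \<le> R}"
  have "int ` ?S \<subseteq> {\<lceil>c - R\<rceil>..\<lfloor>c + R\<rfloor>}"
  proof
    fix z assume "z \<in> int ` ?S"
    then obtain i where i: "i \<in> ?S" "z = int i" by auto
    then have "c - R \<le> real i" "real i \<le> c + R" by auto
    then show "z \<in> {\<lceil>c - R\<rceil>..\<lfloor>c + R\<rfloor>}" using i
      by (auto simp: ceiling_le_iff le_floor_iff)
  qed
  then have "card (int ` ?S) \<le> card {\<lceil>c - R\<rceil>..\<lfloor>c + R\<rfloor>}" by (intro card_mono) auto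
  moreover have "card (int ` ?S) = card ?S" by (intro card_image) auto
  ultimately have le: "card ?S \<le> nat (\<lfloor>c + R\<rfloor> - \<lceil>c - R\<rceil> + 1)" by simp
  have "real_of_int (\<lfloor>c + R\<rfloor> - \<lceil>c - R\<rceil> + 1) \<le> 2 * R + 1"
    unfolding of_int_add of_int_diff of_int_1
    using of_int_floor_le[of "c + R"] le_of_int_ceiling[of "c - R"] by linarith
  then have "real (nat (\<lfloor>c + R\<rfloor> - \<lceil>c - R\<rceil> + 1)) \<le> 2 * R + 1"
    using assms by (cases "\<lfloor>c + R\<rfloor> - \<lceil>c - R\<rceil> + 1 \<ge> 0") (auto simp: of_nat_nat)
  moreover have "real (card ?S) \<le> real (nat (\<lfloor>c + R\<rfloor> - \<lceil>c - R\<rceil> + 1))" using le by (rule of_nat_mono)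
  ultimately show ?thesis by linarith
qed

locale expanding_map =
  fixes T :: "real \<Rightarrow> real" and l :: nat and \<Lambda> :: "nat \<Rightarrow> nat"
  assumes T_condition1: "condition1 T l \<Lambda>"
begin

abbreviation "bl \<equiv> beta_lo \<Lambda>"
abbreviation "bh \<equiv> beta_hi \<Lambda>"
abbreviation "Lmax \<equiv> real (Lambda_max l \<Lambda>)"

lemma Lambda_ge_2: "a \<in> {1..l} \<Longrightarrow> \<Lambda> a \<ge> 2" using T_condition1 unfolding condition1_def by auto
lemma sum_inverse_Lambda: "(\<Sum>j\<in>{1..l}. 1 / real (\<Lambda> j)) = 1" using T_condition1 unfolding condition1_def by auto
lemma l_ge_1: "l \<ge> 1" using sum_inverse_Lambda by (cases l) auto
lemma T_affine: "a \<in> {1..l} \<Longrightarrow> x \<in> {bl a<..<bh a} \<Longrightarrow> T x = real (\<Lambda> a) * (x - bl a)"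
  using T_condition1 unfolding condition1_def by auto

lemma Lambda_le_Lmax: "a \<in> {1..l} \<Longrightarrow> real (\<Lambda> a) \<le> Lmax"
  unfolding Lambda_max_def by (auto intro: Max_ge)

lemma Lmax_ge_2: "Lmax \<ge> 2" using Lambda_le_Lmax[of 1] Lambda_ge_2[of 1] l_ge_1 by force

lemma bl_1: "bl 1 = 0" unfolding beta_lo_def by simp
lemma bh_eq_bl_Suc: "a \<ge> 1 \<Longrightarrow> bh a = bl (Suc a)"
  unfolding beta_hi_def beta_lo_def by (simp add: sum.atLeastLessThan_Suc)
lemma bh_l: "bh l = 1"
  using l_ge_1 sum_inverse_Lambda unfolding bh_eq_bl_Suc[OF l_ge_1] beta_lo_def by (simp add: atLeastLessThanSuc_atLeastAtMost)
lemma bl_mono: "a \<le> b \<Longrightarrow> bl a \<le> bl b"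
  unfolding beta_lo_def by (intro sum_mono2) auto
lemma bl_less_bh: "a \<in> {1..l} \<Longrightarrow> bl a < bh a"
  using Lambda_ge_2[of a] unfolding beta_hi_def by auto
lemma bh_le_bl: "1 \<le> a \<Longrightarrow> a < b \<Longrightarrow> bh a \<le> bl b"
  using bl_mono[of "Suc a" b] bh_eq_bl_Suc by auto
lemma bh_le_1: "a \<in> {1..l} \<Longrightarrow> bh a \<le> 1"
  using bl_mono[of "Suc a" "Suc l"] bh_eq_bl_Suc[of a] bh_eq_bl_Suc[of l] bh_l l_ge_1 by auto
lemma Lambda_times_width: "a \<in> {1..l} \<Longrightarrow> real (\<Lambda> a) * (bh a - bl a) = 1"
  using Lambda_ge_2[of a] unfolding beta_hi_def by auto

definition branch_of :: "real \<Rightarrow> nat" where "branch_of x = Max {a\<in>{1..l}. bl a \<le> x}"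

lemma branch_of_bounds:
  assumes "0 \<le> x" "x < 1"
  shows "branch_of x \<in> {1..l}" "bl (branch_of x) \<le> x" "x < bh (branch_of x)"
proof -
  let ?S = "{a\<in>{1..l}. bl a \<le> x}"
  have fin: "finite ?S" by auto
  have ne: "?S \<noteq> {}" using l_ge_1 bl_1 assms by force
  have mem: "branch_of x \<in> ?S" unfolding branch_of_def using Max_in[OF fin ne] .
  then show "branch_of x \<in> {1..l}" "bl (branch_of x) \<le> x" by auto
  show "x < bh (branch_of x)"
  proof (cases "branch_of x < l")
    case True
    show ?thesis
    proof (rule ccontr)
      assume "\<not> x < bh (branch_of x)"
      then have "bl (Suc (branch_of x)) \<le> x" using bh_eq_bl_Suc[of "branch_of x"] mem by auto
      then have "Suc (branch_of x) \<in> ?S" using True by auto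
      then have "Suc (branch_of x) \<le> branch_of x" unfolding branch_of_def by (intro Max_ge[OF fin])
      then show False by simp
    qed
  next
    case False
    then have "branch_of x = l" using mem by auto
    then show ?thesis using bh_l assms by simp
  qed
qed

lemma branch_of_unique:
  assumes "a \<in> {1..l}" "bl a \<le> x" "x < bh a"
  shows "branch_of x = a"
  unfolding branch_of_def
proof (rule Max_eqI)
  fix b assume b: "b \<in> {a\<in>{1..l}. bl a \<le> x}"
  show "b \<le> a"
  proof (rule ccontr)
    assume "\<not> b \<le> a"
    then have "bh a \<le> bl b" using assms(1) by (intro bh_le_bl) auto
    then show False using b assms by auto
  qed
qed (use assms in auto)

lemma branch_of_mono:
  assumes "0 \<le> x" "x \<le> y" "y < 1"
  shows "branch_of x \<le> branch_of y"
proof -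
  have "branch_of x \<in> {a\<in>{1..l}. bl a \<le> y}" using branch_of_bounds[of x] assms by auto
  then show ?thesis unfolding branch_of_def[of y] by (intro Max_ge) auto
qed

text \<open>Condition 1 prescribes \<open>T\<close> only on the open branches; \<open>T_ext\<close> is its affine
  extension to all of \<open>\<real>\<close>.\<close>

definition T_ext :: "real \<Rightarrow> real" where
  "T_ext x = (if x < 1 then real (\<Lambda> (branch_of x)) * (x - bl (branch_of x)) else 1)"

lemma T_ext_on_branch:
  assumes "a \<in> {1..l}" "bl a \<le> x" "x < bh a"
  shows "T_ext x = real (\<Lambda> a) * (x - bl a)"
proof -
  have "x < 1" using bh_le_1[OF assms(1)] assms by auto
  then show ?thesis unfolding T_ext_def using branch_of_unique[OF assms] by simp
qed

lemma T_ext_in_unit: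
  assumes "0 \<le> x" "x \<le> 1"
  shows "T_ext x \<in> {0..1}"
proof (cases "x < 1")
  case True
  note b = branch_of_bounds[OF assms(1) True]
  have "T_ext x = real (\<Lambda> (branch_of x)) * (x - bl (branch_of x))" using True unfolding T_ext_def by simp
  moreover have "real (\<Lambda> (branch_of x)) * (x - bl (branch_of x)) \<le> real (\<Lambda> (branch_of x)) * (bh (branch_of x) - bl (branch_of x))"
    using b by (intro mult_left_mono) auto
  ultimately show ?thesis using Lambda_times_width[OF b(1)] b by auto
qed (auto simp: T_ext_def)

lemma dist_T_ext_endpoint:
  assumes g: "circle_lipschitz g L" and x: "0 \<le> x" "x < 1"
  shows "\<bar>g (T_ext x) - g 0\<bar> \<le> L * Lmax * (x - bl (branch_of x))"
    and "\<bar>g (T_ext x) - g 0\<bar> \<le> L * Lmax * (bh (branch_of x) - x)"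
proof -
  note b = branch_of_bounds[OF x]
  let ?a = "branch_of x"
  have Tx: "T_ext x = real (\<Lambda> ?a) * (x - bl ?a)" using x unfolding T_ext_def by simp
  have TR: "T_ext x \<in> {0..1}" using T_ext_in_unit x by auto
  have L: "0 \<le> L" using circle_lipschitzD[OF g] by simp
  have "\<bar>g (T_ext x) - g 0\<bar> \<le> L * \<bar>T_ext x - 0\<bar>" using circle_lipschitzD(2)[OF g TR, of 0] by simp
  also have "\<bar>T_ext x - 0\<bar> = real (\<Lambda> ?a) * (x - bl ?a)" using Tx b by simp
  also have "L * \<dots> \<le> L * (Lmax * (x - bl ?a))"
    using Lambda_le_Lmax[OF b(1)] b L by (intro mult_left_mono mult_right_mono) auto
  finally show "\<bar>g (T_ext x) - g 0\<bar> \<le> L * Lmax * (x - bl (branch_of x))" by (simp add: mult_ac)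
  have "\<bar>g (T_ext x) - g 0\<bar> = \<bar>g (T_ext x) - g 1\<bar>" using circle_lipschitzD(4)[OF g] by simp
  also have "\<dots> \<le> L * \<bar>T_ext x - 1\<bar>" using circle_lipschitzD(2)[OF g TR] by simp
  also have "\<bar>T_ext x - 1\<bar> = real (\<Lambda> ?a) * (bh ?a - x)"
    using Tx Lambda_times_width[OF b(1)] TR by (auto simp: algebra_simps)
  also have "L * \<dots> \<le> L * (Lmax * (bh ?a - x))"
    using Lambda_le_Lmax[OF b(1)] b L by (intro mult_left_mono mult_right_mono) auto
  finally show "\<bar>g (T_ext x) - g 0\<bar> \<le> L * Lmax * (bh (branch_of x) - x)" by (simp add: mult_ac)
qed

lemma abs_T_ext_diff_same_branch:
  assumes "0 \<le> x" "x < 1" "0 \<le> y" "y < 1" "branch_of x = branch_of y"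
  shows "\<bar>T_ext x - T_ext y\<bar> \<le> Lmax * \<bar>x - y\<bar>"
proof -
  have "T_ext x - T_ext y = real (\<Lambda> (branch_of x)) * (x - y)"
    using assms unfolding T_ext_def by (simp add: algebra_simps)
  then show ?thesis
    using Lambda_le_Lmax[OF branch_of_bounds(1)[OF assms(1,2)]] by (simp add: abs_mult mult_right_mono)
qed

lemma dist_comp_T_ext_across_branches:
  assumes g: "circle_lipschitz g L" and xy: "0 \<le> x" "x < 1" "x \<le> y" "y \<le> 1"
    and across: "y < 1 \<Longrightarrow> branch_of x < branch_of y"
  shows "\<bar>g (T_ext x) - g (T_ext y)\<bar> \<le> L * Lmax * (y - x)"
proof -
  have L: "0 \<le> L * Lmax" using circle_lipschitzD(1)[OF g] Lmax_ge_2 by simp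
  have bx: "branch_of x \<in> {1..l}" using branch_of_bounds[OF xy(1,2)] by simp
  have y: "bh (branch_of x) \<le> y \<and> \<bar>g (T_ext y) - g 0\<bar> \<le> L * Lmax * (y - bh (branch_of x))"
  proof (cases "y < 1")
    case True
    have "bh (branch_of x) \<le> bl (branch_of y)" using bx across[OF True] by (intro bh_le_bl) auto
    moreover have "bl (branch_of y) \<le> y" using branch_of_bounds[OF _ True] xy by simp
    moreover have "\<bar>g (T_ext y) - g 0\<bar> \<le> L * Lmax * (y - bl (branch_of y))"
      using dist_T_ext_endpoint(1)[OF g _ True] xy by simp
    ultimately show ?thesis using L by (smt (verit) mult_left_mono)
  next
    case False
    then show ?thesis using xy bh_le_1[OF bx] L circle_lipschitzD(4)[OF g] by (simp add: T_ext_def)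
  qed
  have "\<bar>g (T_ext x) - g (T_ext y)\<bar> \<le> \<bar>g (T_ext x) - g 0\<bar> + \<bar>g (T_ext y) - g 0\<bar>" by linarith
  also have "\<dots> \<le> L * Lmax * (bh (branch_of x) - x) + L * Lmax * (y - bh (branch_of x))"
    using dist_T_ext_endpoint(2)[OF g xy(1,2)] y by linarith
  finally show ?thesis by (simp add: algebra_simps)
qed

lemma lipschitz_comp_T_ext:
  assumes g: "circle_lipschitz g L" and xy: "0 \<le> x" "x \<le> y" "y \<le> 1"
  shows "\<bar>g (T_ext x) - g (T_ext y)\<bar> \<le> Lmax * L * (y - x)"
proof (cases "y < 1 \<and> branch_of x = branch_of y")
  case True
  have "\<bar>g (T_ext x) - g (T_ext y)\<bar> \<le> L * \<bar>T_ext x - T_ext y\<bar>"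
    using circle_lipschitzD(2)[OF g] T_ext_in_unit xy by auto
  also have "\<dots> \<le> L * (Lmax * \<bar>x - y\<bar>)"
    using True xy circle_lipschitzD(1)[OF g] by (intro mult_left_mono abs_T_ext_diff_same_branch) auto
  finally show ?thesis using xy by (simp add: mult_ac)
next
  case False
  show ?thesis
  proof (cases "x < 1")
    case True
    have "y < 1 \<Longrightarrow> branch_of x < branch_of y"
      using False branch_of_mono[OF xy(1,2)] by (simp add: order_le_less)
    then show ?thesis using dist_comp_T_ext_across_branches[OF g xy(1) True xy(2,3)] by (simp add: mult_ac)
  next
    case False
    then have "x = y" using xy by linarith
    then show ?thesis by simp
  qed
qed

lemma circle_lipschitz_comp_T_ext:
  assumes g: "circle_lipschitz g L"
  shows "circle_lipschitz (\<lambda>x. g (T_ext x)) (Lmax * L)"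
  unfolding circle_lipschitz_def
proof (intro conjI ballI)
  show "0 \<le> Lmax * L" using circle_lipschitzD(1)[OF g] Lmax_ge_2 by simp
  fix x y :: real assume x: "x \<in> {0..1}" and y: "y \<in> {0..1}"
  show "\<bar>g (T_ext x) - g (T_ext y)\<bar> \<le> Lmax * L * \<bar>x - y\<bar>"
  proof (cases "x \<le> y")
    case True then show ?thesis using lipschitz_comp_T_ext[OF g, of x y] x y by auto
  next
    case False then show ?thesis using lipschitz_comp_T_ext[OF g, of y x] x y by (auto simp: abs_minus_commute)
  qed
next
  fix x :: real assume "x \<in> {0..1}"
  then show "\<bar>g (T_ext x)\<bar> \<le> 1" using circle_lipschitzD(3)[OF g] T_ext_in_unit by auto
next
  have "T_ext 0 = real (\<Lambda> 1) * (0 - bl 1)"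
    by (rule T_ext_on_branch) (use bl_1 bl_less_bh[of 1] l_ge_1 in auto)
  then have "T_ext 0 = 0" using bl_1 by simp
  moreover have "T_ext 1 = 1" by (simp add: T_ext_def)
  ultimately show "g (T_ext 0) = g (T_ext 1)" using circle_lipschitzD(4)[OF g] by simp
qed

end

section \<open>An Egorov estimate\<close>

context unitary_words begin

lemma sum_row_sqnorm_unitary:
  assumes "i < n"
  shows "(\<Sum>j<n. (cmod (U $$ (i,j)))^2) = 1"
proof -
  have "(U * Uh) $$ (i,i) = (\<Sum>j<n. U $$ (i,j) * Uh $$ (j,i))" using assms by (intro index_mult_mat_sum) auto
  also have "\<dots> = (\<Sum>j<n. of_real ((cmod (U $$ (i,j)))^2))"
    using assms by (intro sum.cong refl) (simp add: complex_norm_square[symmetric] del: of_real_power)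
  finally have "of_real (\<Sum>j<n. (cmod (U $$ (i,j)))^2) = (1::complex)" using assms by simp
  then show ?thesis using of_real_eq_1_iff by blast
qed

lemma op_bound_conj_diag_diff:
  fixes h k :: "nat \<Rightarrow> real" and e Cc :: real
  assumes e: "0 \<le> e" and Cc: "0 \<le> Cc"
    and card: "\<And>j. j < n \<Longrightarrow> real (card {i. i < n \<and> U $$ (i,j) \<noteq> 0}) \<le> Cc"
    and close: "\<And>i j. i < n \<Longrightarrow> j < n \<Longrightarrow> U $$ (i,j) \<noteq> 0 \<Longrightarrow> \<bar>h i - k j\<bar> \<le> e"
  shows "op_bound n (Uh * diag_matrix n (\<lambda>i. of_real (h i)) * U - diag_matrix n (\<lambda>i. of_real (k i))) (e * sqrt Cc)"
proof -
  define M where "M = mat n n (\<lambda>(i,j). of_real (h i - k j) * U $$ (i,j))"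
  have eqM: "diag_matrix n (\<lambda>i. of_real (h i)) * U - U * diag_matrix n (\<lambda>i. of_real (k i)) = M"
  proof (rule eq_matI)
    fix i j assume "i < dim_row M" "j < dim_col M"
    then have "i < n" "j < n" by (auto simp: M_def)
    then show "(diag_matrix n (\<lambda>i. of_real (h i)) * U - U * diag_matrix n (\<lambda>i. of_real (k i))) $$ (i,j) = M $$ (i,j)"
      by (simp add: M_def index_diag_matrix_mult index_mult_diag_matrix algebra_simps del: index_mult_mat(1))
  qed (auto simp: M_def)
  have "Uh * M = Uh * (diag_matrix n (\<lambda>i. of_real (h i)) * U) - Uh * (U * diag_matrix n (\<lambda>i. of_real (k i)))"
    unfolding eqM[symmetric] by (rule mult_minus_distrib_mat[of _ n n]) auto
  then have eq: "Uh * diag_matrix n (\<lambda>i. of_real (h i)) * U - diag_matrix n (\<lambda>i. of_real (k i)) = Uh * M"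
    by simp
  have "op_bound n M (e * sqrt Cc)"
    unfolding M_def using sum_row_sqnorm_unitary card close e Cc
    by (intro op_bound_scaled_entries) (auto simp del: of_real_diff)
  then have "op_bound n (Uh * M) (1 * (e * sqrt Cc))"
    by (rule op_bound_mult[OF op_bound_unitary[OF unitary_Uh]])
  then show ?thesis unfolding eq by simp
qed

end

definition egorov_const :: "real \<Rightarrow> real" where
  "egorov_const L = (L + 1) * (L + 2) / 2"

locale quantized_map = expanding_map T l \<Lambda> + unitary_words n U chi
  for T l \<Lambda> n U chi +
  assumes n_pos: "n > 0"
    and endpoints_on_grid: "\<And>a. a \<in> {1..l} \<Longrightarrow> (\<exists>q::nat. bl a = real q / real n) \<and> (\<exists>q::nat. bh a = real q / real n)"
    and norm_U_entry: "\<And>i j. i < n \<Longrightarrow> j < n \<Longrightarrow> (cmod (U $$ (i,j)))^2 = measure lebesgue (cell n j \<inter> T -` cell n i) / (1 / real n)"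
begin

lemma cell_in_branch:
  assumes j: "j < n"
  shows "branch_of (real j / real n) \<in> {1..l}" "bl (branch_of (real j / real n)) \<le> real j / real n"
    "real (j+1) / real n \<le> bh (branch_of (real j / real n))"
proof -
  have x: "0 \<le> real j / real n" "real j / real n < 1" using j n_pos by (auto simp: divide_simps)
  note b = branch_of_bounds[OF x]
  show "branch_of (real j / real n) \<in> {1..l}" "bl (branch_of (real j / real n)) \<le> real j / real n" using b by auto
  obtain q :: nat where q: "bh (branch_of (real j / real n)) = real q / real n" using endpoints_on_grid[OF b(1)] by blast
  have "real j / real n < real q / real n" using b(3) q by simp
  then have "real j < real q" using n_pos by (simp add: divide_less_cancel)
  then have "j < q" by simp
  then have "real (j+1) \<le> real q" by simp
  then show "real (j+1) / real n \<le> bh (branch_of (real j / real n))" unfolding q using n_pos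
    by (simp add: divide_right_mono)
qed

lemma cell_mid_in_branch:
  assumes j: "j < n"
  defines "a \<equiv> branch_of (real j / real n)"
  shows "bl a < cell_mid n j" "cell_mid n j < bh a" "T_ext (cell_mid n j) = real (\<Lambda> a) * (cell_mid n j - bl a)"
proof -
  note cb = cell_in_branch[OF j, folded a_def]
  have "real j / real n < cell_mid n j" "cell_mid n j < real (j+1) / real n"
    using n_pos unfolding cell_mid_def by (auto simp: divide_simps)
  then show "bl a < cell_mid n j" "cell_mid n j < bh a" using cb by auto
  then show "T_ext (cell_mid n j) = real (\<Lambda> a) * (cell_mid n j - bl a)"
    by (intro T_ext_on_branch cb(1)) auto
qed

text \<open>The source of the sparsity of \<open>U\<close>: \<open>|U\<^sub>i\<^sub>j|\<^sup>2\<close> is the measure of \<open>E\<^sub>j \<inter> T\<^sup>-\<^sup>1 E\<^sub>i\<close>.\<close>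

lemma entry_nonzero_point:
  assumes i: "i < n" and j: "j < n" and U0: "U $$ (i,j) \<noteq> 0"
  defines "a \<equiv> branch_of (real j / real n)"
  obtains x where "x \<in> cell n j" "T x \<in> cell n i" "bl a < x" "x < bh a"
proof -
  have "measure lebesgue (cell n j \<inter> T -` cell n i) \<noteq> 0"
    using norm_U_entry[OF i j] U0 by auto
  then obtain x where x: "x \<in> cell n j \<inter> T -` cell n i" "x \<notin> {bl a, bh a}"
    by (metis negligible_finite negligible_imp_measure0 negligible_subset finite.emptyI finite_insert subsetI)
  moreover have "bl a \<le> x" "x \<le> bh a"
    using x(1) cell_in_branch[OF j, folded a_def] unfolding cell_def by auto
  ultimately show thesis using that by auto
qed

lemma cell_mid_T_ext_close:
  assumes i: "i < n" and j: "j < n" and U0: "U $$ (i,j) \<noteq> 0"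
  shows "\<bar>cell_mid n i - T_ext (cell_mid n j)\<bar> \<le> (Lmax + 1) / (2 * real n)"
proof -
  define a where "a = branch_of (real j / real n)"
  obtain x where x: "x \<in> cell n j" "T x \<in> cell n i" "bl a < x" "x < bh a"
    using entry_nonzero_point[OF i j U0] unfolding a_def by blast
  have a: "a \<in> {1..l}" using cell_in_branch[OF j] unfolding a_def by simp
  have "T x = real (\<Lambda> a) * (x - bl a)" using T_affine[OF a] x by simp
  moreover have "T_ext (cell_mid n j) = real (\<Lambda> a) * (cell_mid n j - bl a)"
    using cell_mid_in_branch(3)[OF j] unfolding a_def .
  ultimately have "T x - T_ext (cell_mid n j) = real (\<Lambda> a) * (x - cell_mid n j)"
    by (simp add: algebra_simps)
  then have "\<bar>T x - T_ext (cell_mid n j)\<bar> = real (\<Lambda> a) * \<bar>x - cell_mid n j\<bar>"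
    by (simp add: abs_mult)
  also have "\<dots> \<le> Lmax * (1 / (2 * real n))"
    using Lambda_le_Lmax[OF a] dist_cell_mid[OF n_pos x(1)] by (intro mult_mono) auto
  finally have "\<bar>T x - T_ext (cell_mid n j)\<bar> \<le> Lmax / (2 * real n)" by simp
  moreover have "\<bar>T x - cell_mid n i\<bar> \<le> 1 / (2 * real n)" by (rule dist_cell_mid[OF n_pos x(2)])
  ultimately have "\<bar>cell_mid n i - T_ext (cell_mid n j)\<bar> \<le> 1 / (2 * real n) + Lmax / (2 * real n)"
    by linarith
  then show ?thesis by (simp add: add_divide_distrib)
qed

lemma card_nonzero_column_le:
  assumes j: "j < n"
  shows "real (card {i. i < n \<and> U $$ (i,j) \<noteq> 0}) \<le> Lmax + 2"
proof -
  let ?c = "real n * T_ext (cell_mid n j) - 1/2" and ?R = "(Lmax + 1) / 2"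
  have sub: "{i. i < n \<and> U $$ (i,j) \<noteq> 0} \<subseteq> {i::nat. i < n \<and> \<bar>real i - ?c\<bar> \<le> ?R}"
  proof safe
    fix i assume i: "i < n" and U0: "U $$ (i,j) \<noteq> 0"
    have g: "\<bar>cell_mid n i - T_ext (cell_mid n j)\<bar> \<le> (Lmax + 1) / (2 * real n)" by (rule cell_mid_T_ext_close[OF i j U0])
    have "real i - ?c = real n * (cell_mid n i - T_ext (cell_mid n j))" using n_pos unfolding cell_mid_def by (simp add: field_simps)
    then have "\<bar>real i - ?c\<bar> = real n * \<bar>cell_mid n i - T_ext (cell_mid n j)\<bar>" by (simp add: abs_mult)
    also have "\<dots> \<le> real n * ((Lmax + 1) / (2 * real n))" using g by (intro mult_left_mono) auto
    also have "\<dots> = ?R" using n_pos by simp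
    finally show "\<bar>real i - ?c\<bar> \<le> ?R" .
  qed
  have "card {i. i < n \<and> U $$ (i,j) \<noteq> 0} \<le> card {i::nat. i < n \<and> \<bar>real i - ?c\<bar> \<le> ?R}"
    by (intro card_mono sub) auto
  then have "real (card {i. i < n \<and> U $$ (i,j) \<noteq> 0}) \<le> real (card {i::nat. i < n \<and> \<bar>real i - ?c\<bar> \<le> ?R})"
    by simp
  also have "\<dots> \<le> 2 * ?R + 1" by (rule card_integer_window_le) (use Lmax_ge_2 in simp)
  also have "2 * ?R + 1 = Lmax + 2" by simp
  finally show ?thesis .
qed

lemma egorov_const_nonneg: "0 \<le> egorov_const Lmax" unfolding egorov_const_def using Lmax_ge_2 by simp

lemma egorov_estimate:
  assumes g: "circle_lipschitz g L"
  shows "op_bound n (Uh * sample_op n g * U - sample_op n (\<lambda>x. g (T_ext x))) (L * egorov_const Lmax / real n)"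
proof -
  have L: "0 \<le> L" using circle_lipschitzD(1)[OF g] .
  let ?e = "L * (Lmax + 1) / (2 * real n)"
  have "op_bound n (Uh * diag_matrix n (\<lambda>i. of_real (g (cell_mid n i))) * U - diag_matrix n (\<lambda>i. of_real (g (T_ext (cell_mid n i))))) (?e * sqrt (Lmax + 2))"
  proof (rule op_bound_conj_diag_diff)
    show "0 \<le> ?e" using L Lmax_ge_2 n_pos by simp
    show "0 \<le> Lmax + 2" using Lmax_ge_2 by simp
    show "real (card {i. i < n \<and> U $$ (i,j) \<noteq> 0}) \<le> Lmax + 2" if "j < n" for j using card_nonzero_column_le[OF that] .
    fix i j assume i: "i < n" and j: "j < n" and U0: "U $$ (i,j) \<noteq> 0"
    have "\<bar>g (cell_mid n i) - g (T_ext (cell_mid n j))\<bar> \<le> L * \<bar>cell_mid n i - T_ext (cell_mid n j)\<bar>"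
      using circle_lipschitzD(2)[OF g] cell_mid_in_unit[OF n_pos i] T_ext_in_unit cell_mid_in_unit[OF n_pos j] by auto
    also have "\<dots> \<le> L * ((Lmax + 1) / (2 * real n))" using cell_mid_T_ext_close[OF i j U0] L by (intro mult_left_mono) auto
    finally show "\<bar>g (cell_mid n i) - g (T_ext (cell_mid n j))\<bar> \<le> ?e" by simp
  qed
  moreover have "?e * sqrt (Lmax + 2) \<le> L * egorov_const Lmax / real n"
  proof -
    have "sqrt (Lmax + 2) \<le> sqrt ((Lmax + 2)^2)"
      using Lmax_ge_2 by (intro real_sqrt_le_mono) (simp add: power2_eq_square)
    also have "\<dots> = Lmax + 2" using Lmax_ge_2 by simp
    finally have sq: "sqrt (Lmax + 2) \<le> Lmax + 2" .
    have "?e * sqrt (Lmax + 2) \<le> ?e * (Lmax + 2)"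
      using L Lmax_ge_2 n_pos by (intro mult_left_mono sq) auto
    also have "\<dots> = L * egorov_const Lmax / real n" unfolding egorov_const_def by (simp add: field_simps)
    finally show ?thesis .
  qed
  ultimately show ?thesis unfolding sample_op_def by (rule op_bound_mono)
qed

end

section \<open>Transfer operators\<close>

text \<open>\<open>iter_const\<close> is chosen so that the error bound \<open>iter_const (\<Lambda>\<^sup>k - 1) / N\<close> of
  \<open>transfer_iter_approx\<close> survives one more transfer step (\<open>iter_const_step\<close>).\<close>

definition iter_const :: "nat \<Rightarrow> real \<Rightarrow> real \<Rightarrow> real" where
  "iter_const l K L = 2 * K * real l * egorov_const L + 2 * K * real l"

locale quantized_partition = quantized_map T l \<Lambda> n U chi + lipschitz_partition l chi K
  for T l \<Lambda> n U chi K +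
  assumes chi_periodic: "\<And>a x. a \<in> {1..l} \<Longrightarrow> chi a (x + 1) = chi a x"
begin

definition weight_sum :: "nat set \<Rightarrow> real \<Rightarrow> real" where "weight_sum A x = (\<Sum>a\<in>A. (chi a x)^2)"

lemma circle_lipschitz_weight_sum:
  assumes "A \<subseteq> {1..l}"
  shows "circle_lipschitz (weight_sum A) (2 * K * real l)"
  unfolding circle_lipschitz_def
proof (intro conjI ballI)
  show "0 \<le> 2 * K * real l" using K_pos by simp
  fix x y :: real
  have "\<bar>weight_sum A x - weight_sum A y\<bar> = \<bar>\<Sum>a\<in>A. (chi a x - chi a y) * (chi a x + chi a y)\<bar>"
    unfolding weight_sum_def by (simp add: sum_subtractf[symmetric] power2_eq_square algebra_simps)
  also have "\<dots> \<le> (\<Sum>a\<in>A. \<bar>(chi a x - chi a y) * (chi a x + chi a y)\<bar>)" by (rule sum_abs)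
  also have "\<dots> \<le> (\<Sum>a\<in>A. (K * \<bar>x - y\<bar>) * 2)"
  proof (rule sum_mono)
    fix a assume a: "a \<in> A"
    then have a': "a \<in> {1..l}" using assms by auto
    have "\<bar>chi a x + chi a y\<bar> \<le> 2" using abs_chi_le_1[OF a', of x] abs_chi_le_1[OF a', of y] by linarith
    then show "\<bar>(chi a x - chi a y) * (chi a x + chi a y)\<bar> \<le> (K * \<bar>x - y\<bar>) * 2"
      unfolding abs_mult using chi_lipschitz[OF a'] K_pos by (intro mult_mono) auto
  qed
  also have "\<dots> = real (card A) * (2 * K) * \<bar>x - y\<bar>" by (simp add: mult_ac)
  also have "\<dots> \<le> real l * (2 * K) * \<bar>x - y\<bar>"
    using card_mono[OF _ assms] K_pos by (intro mult_right_mono) auto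
  finally show "\<bar>weight_sum A x - weight_sum A y\<bar> \<le> 2 * K * real l * \<bar>x - y\<bar>" by (simp add: mult_ac)
next
  fix x :: real
  have "0 \<le> weight_sum A x" unfolding weight_sum_def by (auto intro: sum_nonneg)
  moreover have "weight_sum A x \<le> weight_sum {1..l} x" unfolding weight_sum_def using assms by (intro sum_mono2) auto
  ultimately show "\<bar>weight_sum A x\<bar> \<le> 1" using sum_chi_square unfolding weight_sum_def by simp
next
  have "\<And>a. a \<in> A \<Longrightarrow> chi a 1 = chi a 0" using chi_periodic[of _ 0] assms by auto
  then show "weight_sum A 0 = weight_sum A 1" unfolding weight_sum_def by (intro sum.cong) auto
qed

lemma weight_sum_all: "weight_sum {1..l} x = 1" unfolding weight_sum_def using sum_chi_square .

definition transfer_op :: "nat set \<Rightarrow> complex mat \<Rightarrow> complex mat" where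
  "transfer_op A X = sandwich_sum n p A (Uh * X * U)"

lemma transfer_op_carrier[simp]: "transfer_op A X \<in> carrier_mat n n" unfolding transfer_op_def by simp

lemma sample_op_carrier[simp]: "sample_op n g \<in> carrier_mat n n" unfolding sample_op_def by simp

lemma op_bound_conj:
  assumes "op_bound n X c"
  shows "op_bound n (Uh * X * U) c"
proof -
  have "op_bound n (Uh * X * U) (1 * c * 1)"
    by (intro op_bound_mult op_bound_unitary unitary_Uh unitary_U assms)
  then show ?thesis by simp
qed

lemma conj_diff:
  assumes "X \<in> carrier_mat n n" "Y \<in> carrier_mat n n"
  shows "Uh * X * U - Uh * Y * U = Uh * (X - Y) * U"
proof -
  have "Uh * (X - Y) = Uh * X - Uh * Y" using assms by (intro mult_minus_distrib_mat[of _ n n]) auto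
  moreover have "(Uh * X - Uh * Y) * U = Uh * X * U - Uh * Y * U"
    using assms by (intro minus_mult_distrib_mat[of _ n n]) auto
  ultimately show ?thesis by simp
qed

lemma conj_approx:
  assumes X: "X \<in> carrier_mat n n" and XD: "op_bound n (X - sample_op n g) D"
    and g: "circle_lipschitz g Lg"
  shows "op_bound n (Uh * X * U - sample_op n (\<lambda>x. g (T_ext x))) (D + Lg * egorov_const Lmax / real n)"
proof (rule op_bound_diff_trans)
  show "op_bound n (Uh * X * U - Uh * sample_op n g * U) D"
    unfolding conj_diff[OF X sample_op_carrier] by (rule op_bound_conj[OF XD])
  show "op_bound n (Uh * sample_op n g * U - sample_op n (\<lambda>x. g (T_ext x))) (Lg * egorov_const Lmax / real n)"
    by (rule egorov_estimate[OF g])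
qed (use X in auto)

lemma sandwich_sum_sample_op_approx:
  assumes A: "A \<subseteq> {1..l}" and h: "\<And>x. x \<in> {0..1} \<Longrightarrow> \<bar>h x\<bar> \<le> 1"
  shows "op_bound n (sandwich_sum n p A (sample_op n h) - sample_op n (\<lambda>x. weight_sum A x * h x)) (real l * (2 * K) / real n)"
proof -
  have "sandwich_sum n p A (sample_op n h) - sample_op n (\<lambda>x. weight_sum A x * h x)
     = diag_matrix n (\<lambda>i. of_real ((\<Sum>a\<in>A. (p a i)^2) - weight_sum A (cell_mid n i)) * of_real (h (cell_mid n i)))"
    unfolding sample_op_def sandwich_sum_diag_matrix diag_matrix_diff by (simp add: algebra_simps)
  moreover have "op_bound n (diag_matrix n (\<lambda>i. of_real ((\<Sum>a\<in>A. (p a i)^2) - weight_sum A (cell_mid n i)) * of_real (h (cell_mid n i)))) (real l * (2 * K) / real n)"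
  proof (rule op_bound_diag_matrix)
    fix i assume i: "i < n"
    have "\<bar>(\<Sum>a\<in>A. (p a i)^2) - weight_sum A (cell_mid n i)\<bar> = \<bar>\<Sum>a\<in>A. ((p a i)^2 - (chi a (cell_mid n i))^2)\<bar>"
      unfolding weight_sum_def by (simp add: sum_subtractf)
    also have "\<dots> \<le> (\<Sum>a\<in>A. \<bar>(p a i)^2 - (chi a (cell_mid n i))^2\<bar>)" by (rule sum_abs)
    also have "\<dots> \<le> (\<Sum>a\<in>A. 2 * K / real n)"
      using cell_avg_square_approx[OF n_pos] A by (intro sum_mono) auto
    also have "\<dots> = real (card A) * (2 * K / real n)" by simp
    also have "\<dots> \<le> real l * (2 * K / real n)"
      using card_mono[OF _ A] K_pos n_pos by (intro mult_right_mono) auto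
    finally have e1: "\<bar>(\<Sum>a\<in>A. (p a i)^2) - weight_sum A (cell_mid n i)\<bar> \<le> real l * (2 * K) / real n" by simp
    have "cmod (of_real ((\<Sum>a\<in>A. (p a i)^2) - weight_sum A (cell_mid n i)) * of_real (h (cell_mid n i)))
       = \<bar>(\<Sum>a\<in>A. (p a i)^2) - weight_sum A (cell_mid n i)\<bar> * \<bar>h (cell_mid n i)\<bar>" by (simp only: norm_mult norm_of_real)
    also have "\<dots> \<le> (real l * (2 * K) / real n) * 1"
      using e1 h[OF cell_mid_in_unit[OF n_pos i]] by (intro mult_mono) auto
    finally show "cmod (of_real ((\<Sum>a\<in>A. (p a i)^2) - weight_sum A (cell_mid n i)) * of_real (h (cell_mid n i))) \<le> real l * (2 * K) / real n" by simp
  qed (use K_pos n_pos in simp)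
  ultimately show ?thesis by simp
qed

lemma transfer_op_approx:
  assumes A: "A \<subseteq> {1..l}" and X: "X \<in> carrier_mat n n" and XD: "op_bound n (X - sample_op n g) D"
    and g: "circle_lipschitz g Lg"
  shows "op_bound n (transfer_op A X - sample_op n (\<lambda>x. weight_sum A x * g (T_ext x)))
           (D + Lg * egorov_const Lmax / real n + real l * (2 * K) / real n)"
proof (rule op_bound_diff_trans)
  have "finite A" using A finite_subset by blast
  moreover have "\<And>i. i < n \<Longrightarrow> (\<Sum>a\<in>A. (p a i)^2) \<le> 1"
    using sum_subset_cell_avg_square_le_1[OF n_pos A] by blast
  ultimately have "op_bound n (sandwich_sum n p A (Uh * X * U - sample_op n (\<lambda>x. g (T_ext x))))
                     (D + Lg * egorov_const Lmax / real n)"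
    by (intro op_bound_sandwich_sum conj_approx[OF X XD g])
  then show "op_bound n (transfer_op A X - sandwich_sum n p A (sample_op n (\<lambda>x. g (T_ext x))))
               (D + Lg * egorov_const Lmax / real n)"
    unfolding transfer_op_def using X by (simp add: sandwich_sum_diff)
  show "op_bound n (sandwich_sum n p A (sample_op n (\<lambda>x. g (T_ext x))) - sample_op n (\<lambda>x. weight_sum A x * g (T_ext x)))
          (real l * (2 * K) / real n)"
    by (rule sandwich_sum_sample_op_approx[OF A])
      (use circle_lipschitzD(3)[OF circle_lipschitz_comp_T_ext[OF g]] in auto)
qed (use X in auto)

text \<open>The quantum and the classical side of iterated transfer steps
  \<open>X \<mapsto> \<Sum>\<^sub>a\<^sub>\<in>\<^sub>A P\<^sub>a U\<^sup>* X U P\<^sub>a\<close> and \<open>g \<mapsto> (\<Sum>\<^sub>a\<^sub>\<in>\<^sub>A \<chi>\<^sub>a\<^sup>2) g \<circ> T\<close>; a letter of a word is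
  the singleton \<open>{a}\<close>, a pulled-back position the full set \<open>{1..l}\<close>.\<close>

primrec transfer_iter :: "nat set list \<Rightarrow> complex mat" where
  "transfer_iter [] = 1\<^sub>m n"
| "transfer_iter (A # As) = transfer_op A (transfer_iter As)"

primrec symbol_iter :: "nat set list \<Rightarrow> real \<Rightarrow> real" where
  "symbol_iter [] = (\<lambda>x. 1)"
| "symbol_iter (A # As) = (\<lambda>x. weight_sum A x * symbol_iter As (T_ext x))"

lemma transfer_iter_carrier[simp]: "transfer_iter As \<in> carrier_mat n n" by (cases As) auto

lemma constants_nonneg: "0 \<le> K * real l" "0 \<le> egorov_const Lmax" "0 \<le> iter_const l K Lmax"
  using K_pos egorov_const_nonneg unfolding iter_const_def by auto

lemma symbol_const_step:
  assumes t: "1 \<le> t"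
  shows "2 * K * real l + Lmax * (2 * K * real l * (t - 1)) \<le> 2 * K * real l * (Lmax * t - 1)"
proof -
  have "2 * K * real l + Lmax * (2 * K * real l * (t - 1)) = 2 * K * real l * (Lmax * t - 1) - (2 * K * real l) * (Lmax - 2)"
    by (simp add: algebra_simps)
  also have "\<dots> \<le> 2 * K * real l * (Lmax * t - 1)" using constants_nonneg Lmax_ge_2 by simp
  finally show ?thesis .
qed

lemma iter_const_step:
  assumes t: "1 \<le> t"
  shows "iter_const l K Lmax * (t - 1) + (2 * K * real l * (t - 1)) * egorov_const Lmax + real l * (2 * K) \<le> iter_const l K Lmax * (Lmax * t - 1)"
proof -
  have "iter_const l K Lmax * (Lmax * t - 1) - (iter_const l K Lmax * (t - 1) + (2 * K * real l * (t - 1)) * egorov_const Lmax + real l * (2 * K))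
      = iter_const l K Lmax * t * (Lmax - 2) + (2 * K * real l) * (t - 1) + (2 * K * real l * egorov_const Lmax)"
    unfolding iter_const_def by (simp add: algebra_simps)
  also have "\<dots> \<ge> 0" using constants_nonneg Lmax_ge_2 t K_pos by (intro add_nonneg_nonneg mult_nonneg_nonneg) auto
  finally show ?thesis by simp
qed

lemma circle_lipschitz_symbol_iter:
  assumes "\<forall>A\<in>set As. A \<subseteq> {1..l}"
  shows "circle_lipschitz (symbol_iter As) (2 * K * real l * (Lmax ^ length As - 1))"
  using assms
proof (induction As)
  case (Cons A As)
  let ?t = "Lmax ^ length As"
  have "circle_lipschitz (symbol_iter (A # As)) (2 * K * real l + Lmax * (2 * K * real l * (?t - 1)))"
    using Cons unfolding symbol_iter.simps
    by (intro circle_lipschitz_mult circle_lipschitz_weight_sum circle_lipschitz_comp_T_ext) auto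
  then show ?case
    by (rule circle_lipschitz_mono) (use symbol_const_step[of ?t] Lmax_ge_2 in \<open>simp add: one_le_power\<close>)
qed (simp add: circle_lipschitz_one)

lemma transfer_iter_approx:
  assumes "\<forall>A\<in>set As. A \<subseteq> {1..l}"
  shows "op_bound n (transfer_iter As - sample_op n (symbol_iter As)) (iter_const l K Lmax * (Lmax ^ length As - 1) / real n)"
  using assms
proof (induction As)
  case Nil
  have "transfer_iter [] - sample_op n (symbol_iter []) = diag_matrix n (\<lambda>i. 0)"
    unfolding sample_op_def by (simp add: diag_matrix_one[symmetric] diag_matrix_diff)
  moreover have "op_bound n (diag_matrix n (\<lambda>i. 0)) 0" by (rule op_bound_diag_matrix) auto
  ultimately show ?case by simp
next
  case (Cons A As)
  let ?t = "Lmax ^ length As"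
  have t: "1 \<le> ?t" using Lmax_ge_2 by (simp add: one_le_power)
  have A: "A \<subseteq> {1..l}" and As: "\<forall>A\<in>set As. A \<subseteq> {1..l}" using Cons.prems by auto
  have "op_bound n (transfer_op A (transfer_iter As) - sample_op n (\<lambda>x. weight_sum A x * symbol_iter As (T_ext x)))
     (iter_const l K Lmax * (?t - 1) / real n + (2 * K * real l * (?t - 1)) * egorov_const Lmax / real n + real l * (2 * K) / real n)"
    using Cons.IH[OF As] circle_lipschitz_symbol_iter[OF As] by (intro transfer_op_approx[OF A]) auto
  moreover have "iter_const l K Lmax * (?t - 1) / real n + (2 * K * real l * (?t - 1)) * egorov_const Lmax / real n + real l * (2 * K) / real n
      \<le> iter_const l K Lmax * (Lmax * ?t - 1) / real n"
    using iter_const_step[OF t] n_pos by (simp add: add_divide_distrib[symmetric] divide_right_mono)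
  ultimately show ?case by (auto intro: op_bound_mono)
qed

lemma Pword_Nil: "Pword n U chi [] = 1\<^sub>m n" unfolding Pword_def by simp

lemma gram_Pword_eq_transfer_iter: "mat_adjoint (Pword n U chi w) * Pword n U chi w = transfer_iter (map (\<lambda>a. {a}) w)"
proof (induction w)
  case Nil then show ?case by (simp add: Pword_Nil)
next
  case (Cons a w)
  show ?case unfolding gram_Pword_Cons Cons by (simp add: transfer_op_def)
qed

lemma pull_gram_eq_transfer_iter: "pull_gram n U chi l e j = transfer_iter (replicate j {1..l} @ map (\<lambda>a. {a}) e)"
  by (induction j) (simp_all add: gram_Pword_eq_transfer_iter transfer_op_def)

end

section \<open>Estimates for the pulled-back measures\<close>

lemma abs_diff_le_sum_steps: "\<bar>f 0 - f r\<bar> \<le> (\<Sum>j<r. \<bar>f (Suc j) - f j\<bar>)" for f :: "nat \<Rightarrow> real"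
proof (induction r)
  case (Suc r) then show ?case by simp
qed simp

lemma sum_power_le_twice:
  assumes "(2::real) \<le> L"
  shows "(\<Sum>j<r. L ^ Suc (j + m)) \<le> 2 * L ^ (r + m)"
proof (induction r)
  case 0 then show ?case using assms by simp
next
  case (Suc r)
  have "(\<Sum>j<Suc r. L ^ Suc (j + m)) = (\<Sum>j<r. L ^ Suc (j + m)) + L ^ Suc (r + m)" by simp
  also have "\<dots> \<le> 2 * L ^ (r + m) + L ^ Suc (r + m)" using Suc by simp
  also have "2 * L ^ (r + m) \<le> L * L ^ (r + m)" using assms by (intro mult_right_mono) auto
  finally show ?case by simp
qed

definition pull_const :: "nat \<Rightarrow> real \<Rightarrow> real \<Rightarrow> real" where
  "pull_const l K L = 4 * iter_const l K L + 2 * K * real l"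

context quantized_partition begin

text \<open>As the weights \<open>\<chi>\<^sub>a\<^sup>2\<close> sum to 1, both operators below are close to the
  multiplication by the symbol composed with \<open>T_ext\<close>.\<close>

lemma transfer_op_full_approx:
  assumes As: "\<forall>A\<in>set As. A \<subseteq> {1..l}"
  shows "op_bound n (transfer_op {1..l} (transfer_iter As) - Uh * transfer_iter As * U)
           (2 * iter_const l K Lmax * Lmax ^ Suc (length As) / real n)"
proof -
  let ?t = "Lmax ^ length As"
  define Z where "Z = transfer_iter As"
  define g where "g = symbol_iter As"
  define G where "G = sample_op n (\<lambda>x. g (T_ext x))"
  define e1 where "e1 = iter_const l K Lmax * (?t - 1) / real n + 2 * K * real l * (?t - 1) * egorov_const Lmax / real n"
  define e2 where "e2 = e1 + real l * (2 * K) / real n"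
  have t: "1 \<le> ?t" using Lmax_ge_2 by (simp add: one_le_power)
  have Z: "Z \<in> carrier_mat n n" unfolding Z_def by simp
  have ZD: "op_bound n (Z - sample_op n g) (iter_const l K Lmax * (?t - 1) / real n)"
    using transfer_iter_approx[OF As] unfolding Z_def g_def .
  have gg: "circle_lipschitz g (2 * K * real l * (?t - 1))"
    using circle_lipschitz_symbol_iter[OF As] unfolding g_def .
  have conj: "op_bound n (Uh * Z * U - G) e1"
    unfolding e1_def G_def by (rule conj_approx[OF Z ZD gg])
  have "op_bound n (transfer_op {1..l} Z - sample_op n (\<lambda>x. weight_sum {1..l} x * g (T_ext x))) e2"
    unfolding e2_def e1_def by (rule transfer_op_approx[OF _ Z ZD gg]) simp
  then have full: "op_bound n (transfer_op {1..l} Z - G) e2"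
    unfolding G_def weight_sum_all by simp
  have "op_bound n (transfer_op {1..l} Z - Uh * Z * U) (e2 + e1)"
    by (rule op_bound_diff_common[OF full conj]) (use Z in \<open>auto simp: G_def\<close>)
  moreover have "e2 + e1 \<le> 2 * iter_const l K Lmax * Lmax ^ Suc (length As) / real n"
  proof -
    have "e2 \<le> iter_const l K Lmax * (Lmax * ?t - 1) / real n"
      using iter_const_step[OF t] n_pos unfolding e2_def e1_def
      by (simp add: add_divide_distrib[symmetric] divide_right_mono)
    also have "\<dots> \<le> iter_const l K Lmax * Lmax ^ Suc (length As) / real n"
      using constants_nonneg n_pos by (intro divide_right_mono mult_left_mono) auto
    finally have "e2 \<le> iter_const l K Lmax * Lmax ^ Suc (length As) / real n" .
    moreover have "e1 \<le> e2" unfolding e2_def using K_pos by simp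
    ultimately show ?thesis by simp
  qed
  ultimately show ?thesis unfolding Z_def by (rule op_bound_mono)
qed

definition "star_defect = real l * (2 * K / real n)"

context
  fixes \<psi> :: "complex vec" and \<mu> :: complex
  assumes psi: "\<psi> \<in> carrier_vec n" and nrm: "sqnorm \<psi> = 1" and eig: "U *\<^sub>v \<psi> = \<mu> \<cdot>\<^sub>v \<psi>"
begin

lemma norm_eigenvalue: "cmod \<mu> = 1"
proof -
  have "sqnorm (U *\<^sub>v \<psi>) = sqnorm \<psi>" using sqnorm_unitary_mult[OF unitary_U psi] .
  then have "(cmod \<mu>)^2 = 1" using nrm unfolding eig sqnorm_smult by simp
  then show ?thesis using norm_ge_zero[of \<mu>] by (simp add: power2_eq_1_iff)
qed

lemma quad_form_conj_eigenvector:
  assumes W: "W \<in> carrier_mat n n"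
  shows "quad_form \<psi> (Uh * W * U) = quad_form \<psi> W"
proof -
  have "quad_form \<psi> (Uh * W * U) = quad_form (U *\<^sub>v \<psi>) W" using quad_form_conj[OF W psi] by simp
  also have "\<dots> = cinner (\<mu> \<cdot>\<^sub>v \<psi>) (\<mu> \<cdot>\<^sub>v (W *\<^sub>v \<psi>))"
    unfolding quad_form_def eig using W psi by (simp add: mult_mat_vec)
  also have "\<dots> = cnj \<mu> * \<mu> * quad_form \<psi> W" unfolding quad_form_def using W psi
    by (simp add: cinner_smult_left cinner_smult_right)
  also have "cnj \<mu> * \<mu> = 1"
    using complex_norm_square[of \<mu>] norm_eigenvalue by (simp add: mult.commute)
  finally show ?thesis by simp
qed

lemma sqnorm_mult_eigenvector:
  assumes A: "A \<in> carrier_mat n n"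
  shows "sqnorm (A *\<^sub>v (U *\<^sub>v \<psi>)) = sqnorm (A *\<^sub>v \<psi>)"
  unfolding eig using A psi norm_eigenvalue by (simp add: mult_mat_vec sqnorm_smult)

lemma mu_hat_pull_eq_Re_quad_form:
  "mu_hat_pull l n U chi \<psi> j e = Re (quad_form \<psi> (pull_gram n U chi l e j))"
proof -
  have "of_real (mu_hat_pull l n U chi \<psi> j e) = quad_form \<psi> (pull_gram n U chi l e j)"
    unfolding mu_hat_pull_def mu_hat_def using sum_words_sqnorm_eq_quad_form[OF psi] .
  then show ?thesis by (metis Re_complex_of_real)
qed

lemma mu_hat_pull_step:
  assumes e: "e \<in> words l m"
  shows "\<bar>mu_hat_pull l n U chi \<psi> (Suc j) e - mu_hat_pull l n U chi \<psi> j e\<bar>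
           \<le> 2 * iter_const l K Lmax * Lmax ^ Suc (j + m) / real n"
proof -
  define As where "As = replicate j {1..l} @ map (\<lambda>a. {a}) e"
  define Z where "Z = transfer_iter As"
  have As: "\<forall>A\<in>set As. A \<subseteq> {1..l}" and len: "length As = j + m"
    using e unfolding As_def words_def by auto
  have Z: "Z \<in> carrier_mat n n" unfolding Z_def by simp
  have gram: "pull_gram n U chi l e j = Z" "pull_gram n U chi l e (Suc j) = transfer_op {1..l} Z"
    unfolding Z_def As_def pull_gram_eq_transfer_iter by (simp_all add: transfer_op_def)
  have "cmod (quad_form \<psi> (transfer_op {1..l} Z) - quad_form \<psi> (Uh * Z * U))
          \<le> 2 * iter_const l K Lmax * Lmax ^ Suc (j + m) / real n * (vnorm \<psi>)^2"
    using transfer_op_full_approx[OF As] Z psi unfolding len Z_def by (intro quad_form_diff_le) auto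
  also have "(vnorm \<psi>)^2 = 1" using nrm by (simp add: vnorm_square)
  finally have "cmod (quad_form \<psi> (transfer_op {1..l} Z) - quad_form \<psi> Z)
                  \<le> 2 * iter_const l K Lmax * Lmax ^ Suc (j + m) / real n"
    using quad_form_conj_eigenvector[OF Z] by simp
  then show ?thesis
    unfolding mu_hat_pull_eq_Re_quad_form gram
    using abs_Re_le_cmod[of "quad_form \<psi> (transfer_op {1..l} Z) - quad_form \<psi> Z"] by simp
qed

lemma mu_hat_pull_0: "mu_hat_pull l n U chi \<psi> 0 e = mu_hat n U chi \<psi> e"
  unfolding mu_hat_pull_def by (simp add: words_0)

lemma mu_hat_pull_estimate:
  assumes e: "e \<in> words l m" and r: "1 \<le> r"
  shows "\<bar>mu_hat n U chi \<psi> e - mu_hat_pull l n U chi \<psi> r e\<bar>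
           \<le> real r * pull_const l K Lmax * Lmax ^ (m + r) / real n"
proof -
  let ?f = "\<lambda>j. mu_hat_pull l n U chi \<psi> j e"
  have "\<bar>?f 0 - ?f r\<bar> \<le> (\<Sum>j<r. \<bar>?f (Suc j) - ?f j\<bar>)" by (rule abs_diff_le_sum_steps)
  also have "\<dots> \<le> (\<Sum>j<r. 2 * iter_const l K Lmax * Lmax ^ Suc (j + m) / real n)"
    by (intro sum_mono mu_hat_pull_step[OF e])
  also have "\<dots> = (2 * iter_const l K Lmax / real n) * (\<Sum>j<r. Lmax ^ Suc (j + m))"
    by (simp add: sum_distrib_left)
  also have "\<dots> \<le> (2 * iter_const l K Lmax / real n) * (2 * Lmax ^ (m + r))"
    using constants_nonneg sum_power_le_twice[OF Lmax_ge_2, where r=r and m=m]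
    by (intro mult_left_mono) (auto simp: add.commute)
  also have "\<dots> \<le> real r * pull_const l K Lmax * Lmax ^ (m + r) / real n"
  proof -
    have "4 * iter_const l K Lmax \<le> 1 * pull_const l K Lmax"
      using K_pos unfolding pull_const_def by simp
    also have "\<dots> \<le> real r * pull_const l K Lmax"
      using r constants_nonneg K_pos unfolding pull_const_def by (intro mult_right_mono) auto
    finally have "4 * iter_const l K Lmax * Lmax ^ (m + r) \<le> real r * pull_const l K Lmax * Lmax ^ (m + r)"
      using Lmax_ge_2 by (intro mult_right_mono) auto
    then show ?thesis using n_pos by (simp add: divide_right_mono)
  qed
  finally show ?thesis unfolding mu_hat_pull_0 .
qed

lemma star_pull_sum_Suc_bounds:
  shows "(1 - star_defect) * star_pull_sum l e j \<psi> \<le> star_pull_sum l e (Suc j) \<psi>"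
    and "star_pull_sum l e (Suc j) \<psi> \<le> star_pull_sum l e j \<psi>"
proof -
  define y where "y w = Uh *\<^sub>v (mat_adjoint (Pword n U chi (w @ e)) *\<^sub>v (U *\<^sub>v \<psi>))" for w
  have y: "y w \<in> carrier_vec n" for w unfolding y_def using psi by simp
  have sy: "sqnorm (y w) = sqnorm (mat_adjoint (Pword n U chi (w @ e)) *\<^sub>v \<psi>)" for w
  proof -
    have "sqnorm (y w) = sqnorm (mat_adjoint (Pword n U chi (w @ e)) *\<^sub>v (U *\<^sub>v \<psi>))"
      unfolding y_def by (rule sqnorm_unitary_mult[OF unitary_Uh]) (use psi in simp)
    also have "\<dots> = sqnorm (mat_adjoint (Pword n U chi (w @ e)) *\<^sub>v \<psi>)"
      by (rule sqnorm_mult_eigenvector) simp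
    finally show ?thesis .
  qed
  have GS: "star_pull_sum l e (Suc j) \<psi> = (\<Sum>w\<in>words l j. \<Sum>a\<in>{1..l}. sqnorm (weight_op n p a *\<^sub>v y w))"
    unfolding star_pull_sum_Suc[OF psi] y_def ..
  have up: "(\<Sum>a\<in>{1..l}. sqnorm (weight_op n p a *\<^sub>v y w)) \<le> sqnorm (y w)" for w
    by (rule sum_sqnorm_weight_op_le[OF y]) (use sum_cell_avg_square_le_1[OF n_pos] in auto)
  have lo: "(1 - star_defect) * sqnorm (y w) \<le> (\<Sum>a\<in>{1..l}. sqnorm (weight_op n p a *\<^sub>v y w))" for w
  proof -
    have "(1 - star_defect) * sqnorm (y w) = (\<Sum>i<n. (1 - star_defect) * (cmod (y w $ i))^2)"
      unfolding sqnorm_def using y[of w] by (simp add: sum_distrib_left)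
    also have "\<dots> \<le> (\<Sum>i<n. (\<Sum>a\<in>{1..l}. (p a i)^2) * (cmod (y w $ i))^2)"
      using sum_cell_avg_square_ge[OF n_pos] unfolding star_defect_def by (intro sum_mono mult_right_mono) auto
    also have "\<dots> = (\<Sum>a\<in>{1..l}. sqnorm (weight_op n p a *\<^sub>v y w))" by (rule sum_sqnorm_weight_op[OF y, symmetric])
    finally show ?thesis .
  qed
  have G0: "star_pull_sum l e j \<psi> = (\<Sum>w\<in>words l j. sqnorm (y w))" unfolding star_pull_sum_def sy ..
  show "star_pull_sum l e (Suc j) \<psi> \<le> star_pull_sum l e j \<psi>" unfolding GS G0 by (intro sum_mono up)
  show "(1 - star_defect) * star_pull_sum l e j \<psi> \<le> star_pull_sum l e (Suc j) \<psi>"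
    unfolding GS G0 sum_distrib_left by (intro sum_mono lo)
qed

lemma star_pull_sum_nonneg: "0 \<le> star_pull_sum l e j \<psi>" unfolding star_pull_sum_def by (auto intro: sum_nonneg)

lemma star_pull_sum_le_1:
  assumes e: "e \<in> words l m"
  shows "star_pull_sum l e j \<psi> \<le> 1"
proof (induction j)
  case 0
  have o: "op_bound n (mat_adjoint (Pword n U chi e)) 1"
    by (intro op_bound_mat_adjoint op_bound_Pword) (use e abs_cell_avg_le_1[OF n_pos] in \<open>auto simp: words_def\<close>)
  have "vnorm (mat_adjoint (Pword n U chi e) *\<^sub>v \<psi>) \<le> 1 * vnorm \<psi>" by (rule op_boundD[OF o psi])
  then have "vnorm (mat_adjoint (Pword n U chi e) *\<^sub>v \<psi>) \<le> 1" using nrm by (simp add: vnorm_def)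
  then have "sqnorm (mat_adjoint (Pword n U chi e) *\<^sub>v \<psi>) \<le> 1" unfolding vnorm_def by simp
  then show ?case unfolding star_pull_sum_def by (simp add: words_0)
next
  case (Suc j) then show ?case using star_pull_sum_Suc_bounds[of e j] by linarith
qed

lemma star_pull_sum_step:
  assumes e: "e \<in> words l m"
  shows "\<bar>star_pull_sum l e (Suc j) \<psi> - star_pull_sum l e j \<psi>\<bar> \<le> star_defect"
proof -
  have star_defect: "0 \<le> star_defect" unfolding star_defect_def using K_pos by simp
  have "star_defect * star_pull_sum l e j \<psi> \<le> star_defect * 1" using star_pull_sum_le_1[OF e] star_defect by (intro mult_left_mono) auto
  then show ?thesis using star_pull_sum_Suc_bounds[of e j] star_pull_sum_nonneg[of e j] by (simp add: algebra_simps abs_if)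
qed

lemma mu_hat_star_pull_estimate:
  assumes e: "e \<in> words l m" and r: "1 \<le> r"
  shows "\<bar>mu_hat_star n U chi \<psi> e - mu_hat_star_pull l n U chi \<psi> r e\<bar>
           \<le> real r * pull_const l K Lmax * Lmax ^ (m + r) / real n"
proof -
  let ?g = "\<lambda>j. star_pull_sum l e j \<psi>"
  have "\<bar>?g 0 - ?g r\<bar> \<le> (\<Sum>j<r. \<bar>?g (Suc j) - ?g j\<bar>)" by (rule abs_diff_le_sum_steps)
  also have "\<dots> \<le> (\<Sum>j<r. star_defect)" by (intro sum_mono star_pull_sum_step[OF e])
  also have "\<dots> = real r * star_defect" by simp
  also have "\<dots> \<le> real r * pull_const l K Lmax * Lmax ^ (m + r) / real n"
  proof -
    have "2 * K * real l \<le> pull_const l K Lmax * 1"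
      using constants_nonneg unfolding pull_const_def by simp
    also have "\<dots> \<le> pull_const l K Lmax * Lmax ^ (m + r)"
      using Lmax_ge_2 constants_nonneg K_pos unfolding pull_const_def
      by (intro mult_left_mono) (auto simp: one_le_power)
    finally have "real r * (2 * K * real l) / real n \<le> real r * (pull_const l K Lmax * Lmax ^ (m + r)) / real n"
      by (intro divide_right_mono mult_left_mono) auto
    moreover have "real r * star_defect = real r * (2 * K * real l) / real n"
      unfolding star_defect_def by simp
    ultimately show ?thesis by (simp add: mult.assoc)
  qed
  finally show ?thesis unfolding star_pull_sum_def mu_hat_star_def mu_hat_star_pull_def
    by (simp add: words_0)
qed

end

end

lemma N_1_dvd:
  assumes q: "quantization T l \<Lambda> N U" and k: "1 \<le> k"
  shows "N 1 dvd N k"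
  using k
proof (induction k)
  case 0 then show ?case by simp
next
  case (Suc k)
  show ?case
  proof (cases "k = 0")
    case True then show ?thesis by simp
  next
    case False
    then have "N 1 dvd N k" using Suc by simp
    moreover have "N k dvd N (Suc k)" using q False unfolding quantization_def by auto
    ultimately show ?thesis by (rule dvd_trans)
  qed
qed

lemma smoothed_partition_uniformly_lipschitz:
  assumes "smoothed_partition l \<Lambda> \<delta> chi"
  obtains K :: real where "K > 0" "\<And>a x y. a \<in> {1..l} \<Longrightarrow> \<bar>chi a x - chi a y\<bar> \<le> K * \<bar>x - y\<bar>"
proof -
  have "\<forall>i\<in>{1..l}. \<exists>L. \<forall>x y. \<bar>chi i x - chi i y\<bar> \<le> L * \<bar>x - y\<bar>"
    using assms unfolding smoothed_partition_def by blast
  then obtain L where L: "\<And>i x y. i \<in> {1..l} \<Longrightarrow> \<bar>chi i x - chi i y\<bar> \<le> L i * \<bar>x - y\<bar>"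
    by metis
  define K where "K = 1 + (\<Sum>i\<in>{1..l}. \<bar>L i\<bar>)"
  have "\<bar>chi a x - chi a y\<bar> \<le> K * \<bar>x - y\<bar>" if a: "a \<in> {1..l}" for a x y
  proof -
    have "\<bar>L a\<bar> \<le> (\<Sum>i\<in>{1..l}. \<bar>L i\<bar>)" using a by (intro member_le_sum) auto
    then have "L a \<le> K" unfolding K_def by linarith
    then show ?thesis using L[OF a, of x y] by (meson abs_ge_zero mult_right_mono order_trans)
  qed
  moreover have "K > 0" unfolding K_def by (simp add: add_pos_nonneg sum_nonneg)
  ultimately show thesis using that by blast
qed

lemma quantized_partition_instance:
  assumes T_condition1: "condition1 T l \<Lambda>" and q: "quantization T l \<Lambda> N U"
    and sp: "smoothed_partition l \<Lambda> \<delta> chi"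
    and K: "K > 0" "\<And>a x y. a \<in> {1..l} \<Longrightarrow> \<bar>chi a x - chi a y\<bar> \<le> K * \<bar>x - y\<bar>"
    and k: "1 \<le> k"
  shows "quantized_partition T l \<Lambda> (N k) (U k) chi K"
proof unfold_locales
  show "condition1 T l \<Lambda>" by (rule T_condition1)
  show "unitary_mat (N k) (U k)" using q k unfolding quantization_def by auto
  show Nk: "0 < N k" using q k unfolding quantization_def by auto
  have N1: "0 < N 1" using q unfolding quantization_def by auto
  obtain d where d: "N k = N 1 * d" using N_1_dvd[OF q k] by (auto elim: dvdE)
  have dpos: "0 < d" using Nk d by (cases d) auto
  have conv: "real i / real (N 1) = real (i * d) / real (N k)" for i
    using N1 dpos unfolding d by (simp add: divide_simps)
  fix a assume a: "a \<in> {1..l}"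
  from q a obtain i1 i2 where "beta_lo \<Lambda> a = real i1 / real (N 1)" "beta_hi \<Lambda> a = real i2 / real (N 1)"
    unfolding quantization_def by blast
  then show "(\<exists>q. beta_lo \<Lambda> a = real q / real (N k)) \<and> (\<exists>q. beta_hi \<Lambda> a = real q / real (N k))"
    using conv by metis
next
  fix i j assume "i < N k" "j < N k"
  then show "(cmod (U k $$ (i, j)))\<^sup>2 = measure lebesgue (cell (N k) j \<inter> T -` cell (N k) i) / (1 / real (N k))"
    using q k unfolding quantization_def by blast
qed (use K sp in \<open>auto simp: smoothed_partition_def\<close>)

theorem lemma3:
  fixes T :: "real \<Rightarrow> real" and l :: nat and \<Lambda> :: "nat \<Rightarrow> nat"
    and N :: "nat \<Rightarrow> nat" and U :: "nat \<Rightarrow> complex mat"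
    and \<delta> :: real and chi :: "nat \<Rightarrow> real \<Rightarrow> real"
  assumes "condition1 T l \<Lambda>"
    and "quantization T l \<Lambda> N U"
    and "smoothed_partition l \<Lambda> \<delta> chi"
  shows "\<forall>m. \<exists>C::real. \<forall>k\<ge>1. \<forall>\<psi> \<mu>. \<forall>\<epsilon>\<in>words l m. \<forall>n\<ge>1.
     (\<psi> \<in> carrier_vec (N k) \<and> sqnorm \<psi> = 1 \<and> U k *\<^sub>v \<psi> = \<mu> \<cdot>\<^sub>v \<psi>) \<longrightarrow>
       \<bar>mu_hat (N k) (U k) chi \<psi> \<epsilon> - mu_hat_pull l (N k) (U k) chi \<psi> n \<epsilon>\<bar>
          \<le> real n * C * real (Lambda_max l \<Lambda>) ^ (m + n) / real (N k) \<and>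
       \<bar>mu_hat_star (N k) (U k) chi \<psi> \<epsilon> - mu_hat_star_pull l (N k) (U k) chi \<psi> n \<epsilon>\<bar>
          \<le> real n * C * real (Lambda_max l \<Lambda>) ^ (m + n) / real (N k)"
proof -
  obtain K where K: "K > 0" "\<And>a x y. a \<in> {1..l} \<Longrightarrow> \<bar>chi a x - chi a y\<bar> \<le> K * \<bar>x - y\<bar>"
    using smoothed_partition_uniformly_lipschitz[OF assms(3)] by blast
  show ?thesis
  proof (intro allI exI[of _ "pull_const l K (real (Lambda_max l \<Lambda>))"] impI ballI)
    fix m k n :: nat and \<psi> :: "complex vec" and \<mu> :: complex and \<epsilon> :: "nat list"
    assume k: "1 \<le> k" and e: "\<epsilon> \<in> words l m" and n: "1 \<le> n"
      and eigen: "\<psi> \<in> carrier_vec (N k) \<and> sqnorm \<psi> = 1 \<and> U k *\<^sub>v \<psi> = \<mu> \<cdot>\<^sub>v \<psi>"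
    interpret quantized_partition T l \<Lambda> "N k" "U k" chi K
      by (rule quantized_partition_instance[OF assms K k])
    show "\<bar>mu_hat (N k) (U k) chi \<psi> \<epsilon> - mu_hat_pull l (N k) (U k) chi \<psi> n \<epsilon>\<bar>
          \<le> real n * pull_const l K (real (Lambda_max l \<Lambda>)) * real (Lambda_max l \<Lambda>) ^ (m + n) / real (N k) \<and>
       \<bar>mu_hat_star (N k) (U k) chi \<psi> \<epsilon> - mu_hat_star_pull l (N k) (U k) chi \<psi> n \<epsilon>\<bar>
          \<le> real n * pull_const l K (real (Lambda_max l \<Lambda>)) * real (Lambda_max l \<Lambda>) ^ (m + n) / real (N k)"
      using mu_hat_pull_estimate[OF _ _ _ e n] mu_hat_star_pull_estimate[OF _ _ _ e n] eigen by blast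
  qed
qed

end
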